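(* Assume $(H_S(\infty))$, let $\mathbf a_\lambda,\mathbf m_\lambda$ be as in the context, let $(N^S_t(i))_{t\ge0,i\in\mathbb{Z}}$ be i.i.d. $SR(\mu_S)$-processes and $\zeta^\lambda_t(i)=\min(N^S_{\mathbf a_\lambda t}(i),1)$. (i) With $K^\lambda_t=(2\mathbf m_\lambda+1)^{-1}\#\{i\in\{-\mathbf m_\lambda,\dots,\mathbf m_\lambda\}:\zeta^\lambda_t(i)>0\}$ and $U^\lambda_t=(\psi_S(K^\lambda_t)/\mathbf a_\lambda)\wedge1$, for all $\varepsilon>0$ and $T>0$, $\lim_{\lambda\to0}\Pr[\sup_{t\in[0,T]}|U^\lambda_t-t\wedge1|>\varepsilon]=0$. (ii) With $C^\lambda_t=C(\zeta^\lambda_t,0)$ and $V^\lambda_t=\big(\mathbf a_\lambda^{-1}\psi_S(1-1/|C^\lambda_t|)\mathbf 1_{\{|C^\lambda_t|>0\}}\big)\wedge1$, for all $\varepsilon>0$ and all $t\in[0,1)$, $\lim_{\lambda\to0}\Pr[C^\lambda_t\subset\{-\mathbf m_\lambda,\dots,\mathbf m_\lambda\},\ |V^\lambda_t-t|<\varepsilon]=1$.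
   Context: $(H_S(\infty))$: $\mu_S$ is a probability measure on $(0,\infty)$ with unbounded support and finite mean $m_S$; with $\nu_S(dt)=m_S^{-1}\mu_S((t,\infty))dt$, for all $t>0$, $\lim_{x\to\infty}\nu_S((x,\infty))/\nu_S((tx,\infty))=t^\infty$ ($=0,1,\infty$ according as $t<1,t=1,t>1$). $\psi_S:(0,1)\to(0,\infty)$ is the inverse of $t\mapsto\nu_S((0,t))$, extended by $\psi_S(0)=0$, $\psi_S(1)=\infty$. $\mathbf a_\lambda$ solves $\lambda\mathbf a_\lambda=\nu_S((\mathbf a_\lambda,\infty))$, $\mathbf n_\lambda=\lfloor1/(\lambda\mathbf a_\lambda)\rfloor$, and $\mathbf m_\lambda:(0,1]\to\mathbb{N}$ is non-increasing with $\mathbf m_\lambda\to\infty$, $\mathbf m_\lambda/\mathbf n_\lambda\to0$ and $\mathbf m_\lambda\nu_S((\mathbf a_\lambda z,\infty))\to\infty$ for every $z\in[0,1)$. A $SR(\mu)$-process: $N_t=\#\{k\ge1:T_k\le t\}$ with $T_1\sim\nu_\mu(dt)=m_\mu^{-1}\mu((t,\infty))dt$, $T_{k+1}=T_k+X_k$, $(X_k)$ i.i.d. with law $\mu$ independent of $T_1$. $C(\eta,i)$ is $\emptyset$ if $\eta(i)=0$, otherwise the maximal block of consecutive integers containing $i$ where $\eta\equiv1$. *)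

theory Defs
  imports "HOL-Probability.Probability"
begin

definition mean_of :: "real measure \<Rightarrow> real" where
  "mean_of mu = (\<integral>x. x \<partial>mu)"

definition stat_nu :: "real measure \<Rightarrow> real measure" where
  "stat_nu mu = density lborel
     (\<lambda>t. ennreal (indicator {0<..} t * measure mu {t<..} / mean_of mu))"

definition psi_of :: "real measure \<Rightarrow> real \<Rightarrow> ereal" where
  "psi_of nu u = (if u \<le> 0 then 0 else if u \<ge> 1 then \<infinity>
      else ereal (THE s. 0 < s \<and> measure nu {0<..<s} = u))"

definition sr_time :: "real \<Rightarrow> (nat \<Rightarrow> real) \<Rightarrow> nat \<Rightarrow> real" where
  "sr_time T1 X k = T1 + (\<Sum>j\<in>{1..<k}. X j)"

definition sr_count :: "real \<Rightarrow> (nat \<Rightarrow> real) \<Rightarrow> real \<Rightarrow> enat" where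
  "sr_count T1 X t = (let S = {k::nat. 1 \<le> k \<and> sr_time T1 X k \<le> t} in
      if finite S then enat (card S) else \<infinity>)"

definition cluster :: "(int \<Rightarrow> 'b::{zero,one}) \<Rightarrow> int \<Rightarrow> int set" where
  "cluster eta i = (if eta i = 0 then {}
      else {j. \<forall>k\<in>{min i j..max i j}. eta k = 1})"

definition zeta :: "(int \<Rightarrow> 'a \<Rightarrow> real) \<Rightarrow> (int \<Rightarrow> nat \<Rightarrow> 'a \<Rightarrow> real) \<Rightarrow> real
     \<Rightarrow> real \<Rightarrow> int \<Rightarrow> 'a \<Rightarrow> enat" where
  "zeta T1 X a t i \<omega> = min (sr_count (T1 i \<omega>) (\<lambda>k. X i k \<omega>) (a * t)) 1"

definition K_frac :: "(int \<Rightarrow> 'a \<Rightarrow> real) \<Rightarrow> (int \<Rightarrow> nat \<Rightarrow> 'a \<Rightarrow> real) \<Rightarrow> real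
     \<Rightarrow> nat \<Rightarrow> real \<Rightarrow> 'a \<Rightarrow> real" where
  "K_frac T1 X a m t \<omega> =
     real (card {i\<in>{- int m..int m}. zeta T1 X a t i \<omega> > 0}) / real (2 * m + 1)"

definition U_proc :: "real measure \<Rightarrow> (int \<Rightarrow> 'a \<Rightarrow> real) \<Rightarrow> (int \<Rightarrow> nat \<Rightarrow> 'a \<Rightarrow> real)
     \<Rightarrow> real \<Rightarrow> nat \<Rightarrow> real \<Rightarrow> 'a \<Rightarrow> real" where
  "U_proc nu T1 X a m t \<omega> =
     real_of_ereal (min (psi_of nu (K_frac T1 X a m t \<omega>) / ereal a) 1)"

definition C_clus :: "(int \<Rightarrow> 'a \<Rightarrow> real) \<Rightarrow> (int \<Rightarrow> nat \<Rightarrow> 'a \<Rightarrow> real) \<Rightarrow> real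
     \<Rightarrow> real \<Rightarrow> 'a \<Rightarrow> int set" where
  "C_clus T1 X a t \<omega> = cluster (\<lambda>i. zeta T1 X a t i \<omega>) 0"

(* V^lambda_t = (a^{-1} psi(1 - 1/|C|) 1_{|C|>0}) \<and> 1, with 1/\<infinity> = 0 *)
definition V_proc :: "real measure \<Rightarrow> (int \<Rightarrow> 'a \<Rightarrow> real) \<Rightarrow> (int \<Rightarrow> nat \<Rightarrow> 'a \<Rightarrow> real)
     \<Rightarrow> real \<Rightarrow> real \<Rightarrow> 'a \<Rightarrow> real" where
  "V_proc nu T1 X a t \<omega> = (let C = C_clus T1 X a t \<omega> in
     real_of_ereal (min (if C = {} then 0
        else psi_of nu (if finite C then 1 - 1 / real (card C) else 1) / ereal a) 1))"

end

theory Submission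
  imports Defs
begin

text \<open>
  Since the inter-renewal times are almost surely nonnegative, site \<open>i\<close> is occupied at time
  \<open>a t\<close> exactly when its first renewal time \<open>T\<^sub>1(i)\<close> is at most \<open>a t\<close>. These events are
  independent, each of probability \<open>1 - G(a t)\<close> with \<open>G(x) = \<nu>((x,\<infinity>))\<close>.

  (i) By Chebyshev's inequality the fraction of vacant sites in the window of size \<open>2m + 1\<close> is
  \<open>G(a t)\<close> up to a relative error of order \<open>(m G(a t))\<^sup>-\<^sup>1\<^sup>/\<^sup>2\<close>, which tends to \<open>0\<close>. Regular
  variation of index \<open>\<infinity>\<close> gives \<open>G(a s) / G(a t) \<rightarrow> 0\<close> for \<open>t < s\<close>, so the fraction lies strictly
  between \<open>G(a s)\<close> and \<open>G(a s')\<close> for any \<open>s' < t < s\<close>, which means \<open>s' < \<psi>(K)/a \<le> s\<close>.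
  Monotonicity in \<open>t\<close> turns pointwise convergence on a finite grid into uniform convergence.

  (ii) By a union bound the cluster of the origin contains \<open>{0..1/G(a s')}\<close> with high
  probability, and on both sides of the origin there is a vacant site within distance
  \<open>k = min (1/(2 G(a s))) m\<close> with probability at least \<open>1 - 2(1 - G(a t))\<^sup>k \<rightarrow> 1\<close>. Hence
  \<open>1/G(a s') < |C| \<le> 1/G(a s)\<close>, i.e. \<open>s' < \<psi>(1 - 1/|C|)/a \<le> s\<close>.
\<close>

lemma one_minus_power_le_exp:
  fixes q :: real
  assumes "0 \<le> q" "q \<le> 1"
  shows "(1 - q) ^ k \<le> exp (- (q * real k))"
proof -
  have "(1 - q) ^ k \<le> exp (- q) ^ k"
    by (rule power_mono) (use assms exp_ge_add_one_self[of "- q"] in auto)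
  also have "\<dots> = exp (- (q * real k))"
    by (simp add: exp_of_nat_mult[symmetric] mult.commute)
  finally show ?thesis .
qed

lemma bad_event_bound_le_exp:
  fixes q y :: real
  assumes y: "0 < y" and q: "0 \<le> q" "q \<le> 1"
  shows "0 \<le> real (nat \<lceil>1 / y\<rceil> + 1) * q + 2 * (1 - q) ^ k"
    and "real (nat \<lceil>1 / y\<rceil> + 1) * q + 2 * (1 - q) ^ k \<le> q / y + 2 * q + 2 * exp (- (q * real k))"
proof -
  show "0 \<le> real (nat \<lceil>1 / y\<rceil> + 1) * q + 2 * (1 - q) ^ k"
    using q by simp
  have "real (nat \<lceil>1 / y\<rceil>) \<le> 1 / y + 1"
    using y of_int_ceiling_le_add_one[of "1 / y"] by (simp add: of_nat_nat)
  then have "(real (nat \<lceil>1 / y\<rceil>) + 1) * q \<le> (1 / y + 2) * q"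
    using q by (intro mult_right_mono) auto
  moreover have "(1 - q) ^ k \<le> exp (- (q * real k))"
    using q by (rule one_minus_power_le_exp)
  ultimately show "real (nat \<lceil>1 / y\<rceil> + 1) * q + 2 * (1 - q) ^ k \<le> q / y + 2 * q + 2 * exp (- (q * real k))"
    by (simp add: algebra_simps)
qed

lemma two_sided_deviation_bound_eq:
  fixes N q x y :: real
  assumes "0 < N" "0 < q" "x < q" "q < y"
  shows "N * q / (N * (q - x))\<^sup>2 + N * q / (N * (y - q))\<^sup>2
    = inverse (N * q) * ((1 / (1 - x / q))\<^sup>2 + (q / y / (1 - q / y))\<^sup>2)"
proof -
  have scale: "N * q / (N * d)\<^sup>2 = inverse (N * q) * (q / d)\<^sup>2" if "d \<noteq> 0" for d
    using assms that by (simp add: field_simps power2_eq_square)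
  have ratios: "1 / (1 - x / q) = q / (q - x)" "q / y / (1 - q / y) = q / (y - q)"
    using assms by (simp_all add: field_simps)
  show ?thesis
    unfolding ratios using assms by (simp add: scale distrib_left)
qed

lemma tendsto_exp_uminus_at_top:
  fixes f :: "'a \<Rightarrow> real"
  assumes "filterlim f at_top F"
  shows "((\<lambda>x. exp (- f x)) \<longlongrightarrow> 0) F"
  using filterlim_compose[OF exp_at_bot assms[unfolded filterlim_uminus_at_top]] by simp

lemma filterlim_min_at_top:
  fixes f g :: "'a \<Rightarrow> real"
  assumes "filterlim f at_top F" and "filterlim g at_top F"
  shows "filterlim (\<lambda>x. min (f x) (g x)) at_top F"
  unfolding filterlim_at_top
proof
  fix Z :: real
  have "eventually (\<lambda>x. Z \<le> f x) F" "eventually (\<lambda>x. Z \<le> g x) F"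
    using assms by (auto simp: filterlim_at_top)
  then show "eventually (\<lambda>x. Z \<le> min (f x) (g x)) F"
    by eventually_elim simp
qed

lemma mono_upper_bound_from_grid:
  fixes f :: "real \<Rightarrow> real" and K :: nat
  assumes mono: "mono f" and le1: "\<And>t. f t \<le> 1" and K: "K \<ge> 2" and Kd: "1 / real K \<le> \<delta>"
    and grid: "\<forall>j\<in>{1..K-1}. \<bar>f (real j / real K) - real j / real K\<bar> < \<delta>" and t: "0 \<le> t"
  shows "f t < min t 1 + 2 * \<delta>"
proof (cases "t * real K < real (K - 1)")
  case True
  define j where "j = nat \<lfloor>t * real K\<rfloor>"
  have Kpos: "real K > 0" using K by simp
  have j: "real j \<le> t * real K" "t * real K < real j + 1"
    using t Kpos by (auto simp: j_def of_nat_nat)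
  have "j + 1 \<in> {1..K-1}" using True j by auto
  then have "f (real (j + 1) / real K) < real (j + 1) / real K + \<delta>"
    using grid by fastforce
  moreover have "f t \<le> f (real (j + 1) / real K)"
    using j Kpos by (intro monoD[OF mono]) (simp add: field_simps)
  moreover have "real (j + 1) / real K \<le> t + 1 / real K"
    using j Kpos by (simp add: field_simps)
  moreover have "t < 1"
  proof -
    have "real (K - 1) \<le> real K" by simp
    then have "t * real K < real K" using True by linarith
    then show ?thesis using Kpos by (simp add: mult_less_cancel_right2)
  qed
  ultimately show ?thesis using Kd by simp
next
  case False
  have Kpos: "real K > 0" using K by simp
  then have "1 - 1 / real K \<le> min t 1"
    using False K by (auto simp: of_nat_diff field_simps min_def)
  moreover have "0 < \<delta>" using less_le_trans[OF _ Kd] Kpos by simp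
  ultimately show ?thesis using le1[of t] Kd by linarith
qed

lemma mono_lower_bound_from_grid:
  fixes f :: "real \<Rightarrow> real" and K :: nat
  assumes mono: "mono f" and ge0: "\<And>t. 0 \<le> f t" and K: "K \<ge> 2" and Kd: "1 / real K \<le> \<delta>"
    and grid: "\<forall>j\<in>{1..K-1}. \<bar>f (real j / real K) - real j / real K\<bar> < \<delta>" and t: "0 \<le> t"
  shows "min t 1 - 2 * \<delta> < f t"
proof (cases "t * real K < 1")
  case True
  have Kpos: "real K > 0" using K by simp
  then have "t < 1 / real K" using True by (simp add: field_simps)
  moreover have "0 < \<delta>" using less_le_trans[OF _ Kd] Kpos by simp
  ultimately show ?thesis using ge0[of t] Kd by linarith
next
  case False
  define j where "j = min (nat \<lfloor>t * real K\<rfloor>) (K - 1)"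
  have Kpos: "real K > 0" using K by simp
  have j1: "j \<in> {1..K-1}" using False K by (auto simp: j_def le_nat_floor)
  have "real j \<le> real (nat \<lfloor>t * real K\<rfloor>)" by (simp add: j_def)
  also have "\<dots> \<le> t * real K" using t by (simp add: of_nat_nat)
  finally have "real j \<le> t * real K" .
  then have "f (real j / real K) \<le> f t"
    using Kpos by (intro monoD[OF mono]) (simp add: field_simps)
  moreover have "f (real j / real K) > real j / real K - \<delta>"
    using grid j1 by fastforce
  moreover have "min t 1 \<le> (real j + 1) / real K"
  proof (cases "nat \<lfloor>t * real K\<rfloor> \<le> K - 1")
    case True
    then have "t * real K < real j + 1" using t by (simp add: j_def min_def of_nat_nat)
    then show ?thesis using Kpos by (simp add: field_simps min_le_iff_disj)
  next
    case False
    then have "real j + 1 = real K" using K by (simp add: j_def of_nat_diff)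
    then show ?thesis using Kpos by simp
  qed
  ultimately show ?thesis using Kd by (simp add: add_divide_distrib)
qed

lemma mono_abs_diff_min_lt_from_grid:
  fixes f :: "real \<Rightarrow> real" and K :: nat
  assumes "mono f" and "\<And>t. 0 \<le> f t \<and> f t \<le> 1" and "K \<ge> 2" and "1 / real K \<le> \<delta>"
    and "\<forall>j\<in>{1..K-1}. \<bar>f (real j / real K) - real j / real K\<bar> < \<delta>" and "0 \<le> t"
  shows "\<bar>f t - min t 1\<bar> < 2 * \<delta>"
  using mono_upper_bound_from_grid[of f K \<delta> t] mono_lower_bound_from_grid[of f K \<delta> t] assms
  by (simp add: abs_less_iff)

lemma eventually_unit_interval_at_right_0: "eventually (\<lambda>l::real. l \<in> {0<..1}) (at_right 0)"
  by (auto simp: eventually_at_right_field intro!: exI[of _ 1])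

lemma mono_abs_diff_min_gt_rational_witness:
  fixes f :: "real \<Rightarrow> real"
  assumes mono: "mono f" and t: "t \<in> {0..T}" and gt: "\<epsilon> < \<bar>f t - min t 1\<bar>"
  shows "\<exists>d\<in>{0, T} \<union> (\<rat> \<inter> {0..T}). \<epsilon> < \<bar>f d - min d 1\<bar>"
proof -
  have min_lip: "\<bar>min r 1 - min t 1\<bar> \<le> \<bar>r - t\<bar>" for r :: real
    by (auto simp: min_def)
  consider "\<epsilon> < f t - min t 1" | "\<epsilon> < min t 1 - f t"
    using gt by linarith
  then show ?thesis
  proof cases
    case 1
    show ?thesis
    proof (cases "t = T")
      case False
      define \<eta> where "\<eta> = f t - min t 1 - \<epsilon>"
      have "t < min T (t + \<eta>)" using False t 1 by (auto simp: \<eta>_def)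
      then obtain r where r: "r \<in> \<rat>" "t < r" "r < min T (t + \<eta>)"
        using Rats_dense_in_real by blast
      have "f t \<le> f r" using r by (intro monoD[OF mono]) simp
      moreover have "min r 1 \<le> min t 1 + (r - t)" using min_lip[of r] r by auto
      ultimately have "\<epsilon> < f r - min r 1" using r by (auto simp: \<eta>_def)
      then show ?thesis using r t by (intro bexI[of _ r]) auto
    qed (use t gt in auto)
  next
    case 2
    show ?thesis
    proof (cases "t = 0")
      case False
      define \<eta> where "\<eta> = min t 1 - f t - \<epsilon>"
      have "max 0 (t - \<eta>) < t" using False t 2 by (auto simp: \<eta>_def)
      then obtain r where r: "r \<in> \<rat>" "max 0 (t - \<eta>) < r" "r < t"
        using Rats_dense_in_real by blast
      have "f r \<le> f t" using r by (intro monoD[OF mono]) simp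
      moreover have "min t 1 - (t - r) \<le> min r 1" using min_lip[of r] r by auto
      ultimately have "\<epsilon> < min r 1 - f r" using r by (auto simp: \<eta>_def)
      then show ?thesis using r t by (intro bexI[of _ r]) auto
    qed (use t gt in auto)
  qed
qed

lemma sets_Collect_finite_config:
  assumes fin: "finite I" and P: "\<And>i. i \<in> I \<Longrightarrow> {\<omega>\<in>space M. P i \<omega>} \<in> sets M"
  shows "{\<omega>\<in>space M. \<Phi> (\<lambda>i. i \<in> I \<and> P i \<omega>)} \<in> sets M"
proof -
  have "{\<omega>\<in>space M. \<Phi> (\<lambda>i. i \<in> I \<and> P i \<omega>)} =
      {\<omega>\<in>space M. \<exists>S\<in>Pow I. \<Phi> (\<lambda>i. i \<in> S) \<and> (\<forall>i\<in>I. P i \<omega> \<longleftrightarrow> i \<in> S)}"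
  proof (intro Collect_cong conj_cong refl iffI)
    fix \<omega> assume "\<Phi> (\<lambda>i. i \<in> I \<and> P i \<omega>)"
    then show "\<exists>S\<in>Pow I. \<Phi> (\<lambda>i. i \<in> S) \<and> (\<forall>i\<in>I. P i \<omega> \<longleftrightarrow> i \<in> S)"
      by (intro bexI[of _ "{i\<in>I. P i \<omega>}"]) auto
  next
    fix \<omega> assume "\<exists>S\<in>Pow I. \<Phi> (\<lambda>i. i \<in> S) \<and> (\<forall>i\<in>I. P i \<omega> \<longleftrightarrow> i \<in> S)"
    then obtain S where "S \<subseteq> I" "\<Phi> (\<lambda>i. i \<in> S)" "\<forall>i\<in>I. P i \<omega> \<longleftrightarrow> i \<in> S"
      by blast
    moreover from this have "(\<lambda>i. i \<in> I \<and> P i \<omega>) = (\<lambda>i. i \<in> S)" by auto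
    ultimately show "\<Phi> (\<lambda>i. i \<in> I \<and> P i \<omega>)" by simp
  qed
  also have "\<dots> \<in> sets M"
  proof (intro sets.sets_Collect_finite_Ex sets.sets_Collect_conj sets.sets_Collect_const
      sets.sets_Collect_finite_All ballI)
    fix S i assume "i \<in> I"
    then show "{\<omega>\<in>space M. P i \<omega> \<longleftrightarrow> i \<in> S} \<in> sets M"
      using P by (cases "i \<in> S") (auto intro: sets.sets_Collect_neg)
  qed (use fin in auto)
  finally show ?thesis .
qed

lemma (in prob_space) count_expectation_variance:
  fixes A :: "'i \<Rightarrow> 'a set"
  assumes fin: "finite I" and ev: "\<And>i. i \<in> I \<Longrightarrow> A i \<in> events"
    and pq: "\<And>i. i \<in> I \<Longrightarrow> prob (A i) = q"
    and pw: "\<And>i j. i \<in> I \<Longrightarrow> j \<in> I \<Longrightarrow> i \<noteq> j \<Longrightarrow> prob (A i \<inter> A j) = q\<^sup>2"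
  defines "Z \<equiv> \<lambda>\<omega>. \<Sum>i\<in>I. indicator (A i) \<omega> :: real"
  shows "expectation Z = real (card I) * q"
    and "variance Z = real (card I) * q * (1 - q)"
proof -
  have int_ind: "integrable M (indicator B :: 'a \<Rightarrow> real)" if "B \<in> events" for B
    using that by (simp add: emeasure_eq_measure)
  have int_pair: "integrable M (indicator (A i \<inter> A j) :: 'a \<Rightarrow> real)" if "i \<in> I" "j \<in> I" for i j
    using that by (intro int_ind sets.Int ev)
  have exp_ind: "expectation (indicator B :: 'a \<Rightarrow> real) = prob B" if "B \<in> events" for B
    using that sets.sets_into_space by (simp add: Int_absorb2)
  have Z2: "(Z \<omega>)\<^sup>2 = (\<Sum>i\<in>I. \<Sum>j\<in>I. indicator (A i \<inter> A j) \<omega>)" for \<omega>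
    unfolding Z_def power2_eq_square sum_product by (simp add: indicator_inter_arith)
  have row: "(\<Sum>j\<in>I. prob (A i \<inter> A j)) = q + (real (card I) - 1) * q\<^sup>2" if i: "i \<in> I" for i
  proof -
    have "(\<Sum>j\<in>I. prob (A i \<inter> A j)) = prob (A i) + (\<Sum>j\<in>I - {i}. prob (A i \<inter> A j))"
      using fin i by (simp add: sum.remove)
    also have "(\<Sum>j\<in>I - {i}. prob (A i \<inter> A j)) = (\<Sum>j\<in>I - {i}. q\<^sup>2)"
      using i by (intro sum.cong) (auto simp: pw)
    finally have "(\<Sum>j\<in>I. prob (A i \<inter> A j)) = q + real (card I - 1) * q\<^sup>2"
      using pq[OF i] fin i by (simp add: card_Diff_singleton)
    moreover have "1 \<le> card I" using fin i by (auto simp: Suc_le_eq card_gt_0_iff)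
    ultimately show ?thesis by (simp add: of_nat_diff)
  qed
  show EZ: "expectation Z = real (card I) * q"
    unfolding Z_def using ev by (simp add: Bochner_Integration.integral_sum int_ind exp_ind pq)
  have "expectation (\<lambda>\<omega>. (Z \<omega>)\<^sup>2) = (\<Sum>i\<in>I. \<Sum>j\<in>I. prob (A i \<inter> A j))"
    unfolding Z2 using ev
    by (simp add: Bochner_Integration.integral_sum Bochner_Integration.integrable_sum int_pair exp_ind)
  also have "\<dots> = real (card I) * (q + (real (card I) - 1) * q\<^sup>2)"
    by (simp add: row)
  finally have EZ2: "expectation (\<lambda>\<omega>. (Z \<omega>)\<^sup>2) = real (card I) * (q + (real (card I) - 1) * q\<^sup>2)" .
  have "integrable M Z" "integrable M (\<lambda>\<omega>. (Z \<omega>)\<^sup>2)"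
    unfolding Z2 unfolding Z_def using ev by (auto intro!: Bochner_Integration.integrable_sum int_ind int_pair)
  then have "variance Z = expectation (\<lambda>\<omega>. (Z \<omega>)\<^sup>2) - (expectation Z)\<^sup>2"
    by (rule variance_eq)
  then show "variance Z = real (card I) * q * (1 - q)"
    by (simp only: EZ EZ2) (simp add: algebra_simps power2_eq_square)
qed

lemma (in prob_space) count_deviation_prob_le:
  fixes A :: "'i \<Rightarrow> 'a set"
  assumes fin: "finite I" and ev: "\<And>i. i \<in> I \<Longrightarrow> A i \<in> events"
    and pq: "\<And>i. i \<in> I \<Longrightarrow> prob (A i) = q"
    and pw: "\<And>i j. i \<in> I \<Longrightarrow> j \<in> I \<Longrightarrow> i \<noteq> j \<Longrightarrow> prob (A i \<inter> A j) = q\<^sup>2"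
    and q: "0 \<le> q" and r: "r > 0"
  shows "prob {\<omega>\<in>space M. r \<le> \<bar>(\<Sum>i\<in>I. indicator (A i) \<omega>) - real (card I) * q\<bar>}
           \<le> real (card I) * q / r\<^sup>2"
proof -
  define Z where "Z = (\<lambda>\<omega>. \<Sum>i\<in>I. indicator (A i) \<omega> :: real)"
  have EV: "expectation Z = real (card I) * q" "variance Z = real (card I) * q * (1 - q)"
    using count_expectation_variance[OF fin ev pq pw] unfolding Z_def by simp_all
  have [measurable]: "Z \<in> borel_measurable M"
    unfolding Z_def using ev by measurable
  have "integrable M (\<lambda>\<omega>. (Z \<omega>)\<^sup>2)"
    unfolding Z_def power2_eq_square sum_product using ev
    by (intro Bochner_Integration.integrable_sum)
       (auto simp: indicator_inter_arith[symmetric] emeasure_eq_measure)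
  then have "prob {\<omega>\<in>space M. r \<le> \<bar>Z \<omega> - real (card I) * q\<bar>} \<le> variance Z / r\<^sup>2"
    using Chebyshev_inequality[of Z r] r by (simp add: EV(1))
  also have "\<dots> = real (card I) * q * (1 - q) / r\<^sup>2"
    by (simp only: EV(2))
  also have "\<dots> \<le> real (card I) * q / r\<^sup>2"
    using q r by (intro divide_right_mono) (simp_all add: mult_left_le)
  finally show ?thesis by (simp add: Z_def)
qed

section \<open>Clusters and occupied sites\<close>

definition zero_cluster :: "(int \<Rightarrow> bool) \<Rightarrow> int set" where
  "zero_cluster b = (if b 0 then {j. \<forall>k\<in>{min 0 j..max 0 j}. b k} else {})"

lemma mem_zero_cluster_iff: "j \<in> zero_cluster b \<longleftrightarrow> (\<forall>k\<in>{min 0 j..max 0 j}. b k)"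
  by (auto simp: zero_cluster_def)

lemma zero_cluster_between:
  assumes "j \<in> zero_cluster b" and "k \<in> {min 0 j..max 0 j}"
  shows "k \<in> zero_cluster b"
  using assms by (auto simp: mem_zero_cluster_iff min_def max_def split: if_splits)

lemma zero_cluster_restrict_window:
  "zero_cluster (\<lambda>i. i \<in> {-n..n} \<and> b i) = zero_cluster b \<inter> {-n..n}"
  by (auto simp: mem_zero_cluster_iff) (auto dest: bspec[of _ _ 0])

lemma zero_cluster_subset_iff_window:
  fixes n :: int
  assumes "0 \<le> n"
  shows "zero_cluster b \<subseteq> {-n..n} \<longleftrightarrow> zero_cluster b \<inter> {-(n+1)..n+1} \<subseteq> {-n..n}"
proof
  assume window: "zero_cluster b \<inter> {-(n+1)..n+1} \<subseteq> {-n..n}"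
  show "zero_cluster b \<subseteq> {-n..n}"
  proof
    fix j assume j: "j \<in> zero_cluster b"
    show "j \<in> {-n..n}"
    proof (rule ccontr)
      assume "j \<notin> {-n..n}"
      then have "n + 1 \<in> zero_cluster b \<or> -(n+1) \<in> zero_cluster b"
        using assms zero_cluster_between[OF j] by (cases "0 \<le> j") auto
      then show False using window assms by auto
    qed
  qed
qed auto

lemma zero_cluster_bounds:
  fixes k1 k :: nat
  assumes occ: "\<forall>j\<in>{0..int k1}. b j"
    and right: "j1 \<in> {1..int k}" "\<not> b j1" and left: "j2 \<in> {-int k..-1}" "\<not> b j2"
  shows "{0..int k1} \<subseteq> zero_cluster b" and "zero_cluster b \<subseteq> {-(int k - 1)..int k - 1}"
proof -
  show "{0..int k1} \<subseteq> zero_cluster b"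
    using occ by (auto simp: mem_zero_cluster_iff)
  show "zero_cluster b \<subseteq> {-(int k - 1)..int k - 1}"
  proof
    fix j assume j: "j \<in> zero_cluster b"
    have "j < j1"
    proof (rule ccontr)
      assume "\<not> j < j1"
      then have "j1 \<in> zero_cluster b" using right by (intro zero_cluster_between[OF j]) auto
      then show False using right by (auto simp: mem_zero_cluster_iff)
    qed
    moreover have "j2 < j"
    proof (rule ccontr)
      assume "\<not> j2 < j"
      then have "j2 \<in> zero_cluster b" using left by (intro zero_cluster_between[OF j]) auto
      then show False using left by (auto simp: mem_zero_cluster_iff)
    qed
    ultimately show "j \<in> {-(int k - 1)..int k - 1}" using right left by auto
  qed
qed

definition occupied ::
  "(int \<Rightarrow> 'a \<Rightarrow> real) \<Rightarrow> (int \<Rightarrow> nat \<Rightarrow> 'a \<Rightarrow> real) \<Rightarrow> real \<Rightarrow> real \<Rightarrow> int \<Rightarrow> 'a \<Rightarrow> bool" where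
  "occupied T1 X c t i \<omega> \<longleftrightarrow> (\<exists>k\<ge>1. sr_time (T1 i \<omega>) (\<lambda>k. X i k \<omega>) k \<le> c * t)"

lemma zeta_eq_occupied: "zeta T1 X c t i \<omega> = (if occupied T1 X c t i \<omega> then 1 else 0)"
proof -
  define S where "S = {k::nat. 1 \<le> k \<and> sr_time (T1 i \<omega>) (\<lambda>k. X i k \<omega>) k \<le> c * t}"
  have "zeta T1 X c t i \<omega> = min (if finite S then enat (card S) else \<infinity>) 1"
    by (simp add: zeta_def sr_count_def S_def)
  moreover have "occupied T1 X c t i \<omega> \<longleftrightarrow> S \<noteq> {}"
    by (auto simp: occupied_def S_def)
  moreover have "finite S \<Longrightarrow> S \<noteq> {} \<Longrightarrow> min (enat (card S)) 1 = 1"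
    by (simp add: one_enat_def Suc_le_eq card_gt_0_iff)
  ultimately show ?thesis by (auto simp: zero_enat_def[symmetric])
qed

lemma occupied_mono:
  assumes "0 < c" "t \<le> t'" "occupied T1 X c t i \<omega>"
  shows "occupied T1 X c t' i \<omega>"
  using assms order_trans[OF _ mult_left_mono[of t t' c]] by (fastforce simp: occupied_def)

lemma occupied_iff_T1_le:
  assumes "\<forall>k\<ge>1. 0 \<le> X i k \<omega>"
  shows "occupied T1 X c t i \<omega> \<longleftrightarrow> T1 i \<omega> \<le> c * t"
proof
  assume "occupied T1 X c t i \<omega>"
  then obtain k where "1 \<le> k" "T1 i \<omega> + (\<Sum>j\<in>{1..<k}. X i j \<omega>) \<le> c * t"
    by (auto simp: occupied_def sr_time_def)
  moreover have "0 \<le> (\<Sum>j\<in>{1..<k}. X i j \<omega>)" using assms by (intro sum_nonneg) auto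
  ultimately show "T1 i \<omega> \<le> c * t" by linarith
qed (auto simp: occupied_def sr_time_def intro!: exI[of _ 1])

lemma K_frac_eq_card_occupied:
  "K_frac T1 X c n t \<omega> = real (card {i\<in>{-int n..int n}. occupied T1 X c t i \<omega>}) / real (2 * n + 1)"
proof -
  have "{i\<in>{-int n..int n}. 0 < zeta T1 X c t i \<omega>} = {i\<in>{-int n..int n}. occupied T1 X c t i \<omega>}"
    by (auto simp: zeta_eq_occupied)
  then show ?thesis by (simp add: K_frac_def)
qed

lemma C_clus_eq_zero_cluster: "C_clus T1 X c t \<omega> = zero_cluster (\<lambda>i. occupied T1 X c t i \<omega>)"
  by (auto simp: C_clus_def cluster_def zero_cluster_def zeta_eq_occupied one_enat_def zero_enat_def)

definition cluster_value :: "real measure \<Rightarrow> real \<Rightarrow> int set \<Rightarrow> real" where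
  "cluster_value nu c C = real_of_ereal (min (if C = {} then 0
     else psi_of nu (if finite C then 1 - 1 / real (card C) else 1) / ereal c) 1)"

lemma V_proc_eq_cluster_value: "V_proc nu T1 X c t \<omega> = cluster_value nu c (C_clus T1 X c t \<omega>)"
  by (simp add: V_proc_def cluster_value_def Let_def)

section \<open>The stationary renewal array\<close>

locale renewal_array = prob_space M for M :: "'a measure" +
  fixes muS :: "real measure" and T1 :: "int \<Rightarrow> 'a \<Rightarrow> real"
    and X :: "int \<Rightarrow> nat \<Rightarrow> 'a \<Rightarrow> real" and a :: "real \<Rightarrow> real" and m :: "real \<Rightarrow> nat"
  assumes mu_prob: "prob_space muS" and mu_sets: "sets muS = sets borel"
    and mu_pos: "measure muS {0<..} = 1"
    and mu_unbounded: "\<And>x. 0 < measure muS {x<..}"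
    and tail_ratio_at_top: "\<And>t. 1 < t \<Longrightarrow>
      filterlim (\<lambda>x. measure (stat_nu muS) {x<..} / measure (stat_nu muS) {t * x<..}) at_top at_top"
    and a_eq: "\<And>l. l \<in> {0<..1} \<Longrightarrow> l * a l = measure (stat_nu muS) {a l<..}"
    and m_tail_at_top: "\<And>z. z \<in> {0..<1} \<Longrightarrow>
      filterlim (\<lambda>l. real (m l) * measure (stat_nu muS) {a l * z<..}) at_top (at_right 0)"
    and indep: "indep_vars (\<lambda>_. borel)
      (\<lambda>p. case p of (i, 0) \<Rightarrow> T1 i | (i, Suc k) \<Rightarrow> X i (Suc k)) UNIV"
    and T1_distr: "\<And>i. distr M borel (T1 i) = stat_nu muS"
    and X_distr: "\<And>i k. 1 \<le> k \<Longrightarrow> distr M borel (X i k) = muS"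
begin

abbreviation nu :: "real measure" where "nu \<equiv> stat_nu muS"

definition tail :: "real \<Rightarrow> real" where "tail x = measure nu {x<..}"

definition nu_cdf :: "real \<Rightarrow> real" where "nu_cdf x = measure nu {0<..<x}"

definition nu_density :: "real \<Rightarrow> ennreal" where
  "nu_density t = ennreal (indicator {0<..} t * measure muS {t<..} / mean_of muS)"

lemma random_variable_T1 [measurable]: "T1 i \<in> borel_measurable M"
proof -
  have "random_variable borel
      ((\<lambda>p. case p of (i, 0) \<Rightarrow> T1 i | (i, Suc k) \<Rightarrow> X i (Suc k)) (i, 0))"
    using indep unfolding indep_vars_def by blast
  then show ?thesis by simp
qed

lemma random_variable_X [measurable]: "1 \<le> k \<Longrightarrow> X i k \<in> borel_measurable M"
proof -
  assume "1 \<le> k"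
  then obtain j where k: "k = Suc j" by (cases k) auto
  have "random_variable borel
      ((\<lambda>p. case p of (i, 0) \<Rightarrow> T1 i | (i, Suc k) \<Rightarrow> X i (Suc k)) (i, Suc j))"
    using indep unfolding indep_vars_def by blast
  then show ?thesis by (simp add: k)
qed

sublocale nu: real_distribution nu
  using real_distribution_distr[OF random_variable_T1[of 0]] by (simp add: T1_distr)

lemma prob_T1_in: "A \<in> sets borel \<Longrightarrow> prob {\<omega>\<in>space M. T1 i \<omega> \<in> A} = measure nu A"
  by (simp flip: T1_distr[of i] add: measure_distr Int_def conj_commute vimage_def)

lemma measure_mu_Ioi_antimono:
  assumes "s \<le> t"
  shows "measure muS {t<..} \<le> measure muS {s<..}"
proof -
  interpret mu: prob_space muS by (rule mu_prob)
  show ?thesis using assms by (intro mu.finite_measure_mono) (auto simp: mu_sets)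
qed

lemma borel_measurable_nu_density [measurable]: "nu_density \<in> borel_measurable borel"
proof -
  have "(\<lambda>t. - measure muS {t<..}) \<in> borel_measurable borel"
    by (rule borel_measurable_mono) (auto simp: mono_def intro: measure_mu_Ioi_antimono)
  then have "(\<lambda>t. measure muS {t<..}) \<in> borel_measurable borel"
    using borel_measurable_uminus by fastforce
  then show ?thesis unfolding nu_density_def by measurable
qed

lemma emeasure_nu: "A \<in> sets borel \<Longrightarrow> emeasure nu A = (\<integral>\<^sup>+ x. nu_density x * indicator A x \<partial>lborel)"
  unfolding stat_nu_def nu_density_def[symmetric, abs_def]
  by (rule emeasure_density) auto

lemma mean_pos: "0 < mean_of muS"
proof (rule ccontr)
  assume "\<not> 0 < mean_of muS"
  then have "nu_density t = 0" for t
    unfolding nu_density_def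
    by (intro ennreal_eq_0_iff[THEN iffD2]) (auto simp: divide_nonneg_nonpos indicator_def)
  then have "emeasure nu UNIV = 0" by (simp add: emeasure_nu)
  then show False using nu.emeasure_space_1 by simp
qed

lemma measure_nu_le_length:
  assumes "A \<subseteq> {x..y}" "x \<le> y" "A \<in> sets borel"
  shows "measure nu A \<le> (y - x) / mean_of muS"
proof -
  have "emeasure nu A \<le> (\<integral>\<^sup>+ t. ennreal (1 / mean_of muS) * indicator {x..y} t \<partial>lborel)"
    unfolding emeasure_nu[OF assms(3)] using assms mean_pos prob_space.prob_le_1[OF mu_prob]
    by (intro nn_integral_mono)
       (auto simp: indicator_def nu_density_def intro!: ennreal_leI divide_right_mono)
  also have "\<dots> = ennreal ((y - x) / mean_of muS)"
    using assms mean_pos by (simp add: nn_integral_cmult_indicator ennreal_mult[symmetric])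
  finally show ?thesis
    using assms mean_pos by (simp add: nu.emeasure_eq_measure ennreal_le_iff)
qed

lemma measure_nu_Ioo_ge:
  assumes "x < y" "0 \<le> x"
  shows "(y - x) * measure muS {y<..} / mean_of muS \<le> measure nu {x<..<y}"
proof -
  have "ennreal ((y - x) * measure muS {y<..} / mean_of muS)
      = (\<integral>\<^sup>+ t. ennreal (measure muS {y<..} / mean_of muS) * indicator {x<..<y} t \<partial>lborel)"
    using assms mean_pos
    by (subst nn_integral_cmult_indicator) (auto simp: ennreal_mult[symmetric] mult.commute)
  also have "\<dots> \<le> (\<integral>\<^sup>+ t. nu_density t * indicator {x<..<y} t \<partial>lborel)"
    using assms mean_pos
    by (intro nn_integral_mono)
       (auto simp: indicator_def nu_density_def intro!: ennreal_leI divide_right_mono measure_mu_Ioi_antimono)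
  also have "\<dots> = emeasure nu {x<..<y}"
    by (simp add: emeasure_nu)
  finally show ?thesis
    using assms mean_pos by (simp add: nu.emeasure_eq_measure ennreal_le_iff)
qed

lemma tail_nonneg: "0 \<le> tail x"
  by (simp add: tail_def)

lemma tail_le_1: "tail x \<le> 1"
  by (simp add: tail_def)

lemma tail_antimono: "x \<le> y \<Longrightarrow> tail y \<le> tail x"
  unfolding tail_def by (intro nu.finite_measure_mono) auto

lemma tail_eq_1_minus_cdf: "tail x = 1 - cdf nu x"
proof -
  have "tail x = measure nu (space nu - {..x})"
    by (simp add: tail_def Compl_eq_Diff_UNIV[symmetric] Compl_atMost)
  then show ?thesis using nu.prob_compl[of "{..x}"] by (simp add: cdf_def2)
qed

lemma tail_tendsto_0: "(tail \<longlongrightarrow> 0) at_top"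
  using tendsto_diff[OF tendsto_const nu.cdf_lim_at_top_prob, of 1]
  by (simp add: tail_eq_1_minus_cdf[abs_def])

lemma tail_pos: "0 < tail x"
proof -
  have "eventually (\<lambda>y. 1 \<le> tail y / tail (2 * y)) at_top"
    using tail_ratio_at_top[of 2] by (simp add: filterlim_at_top tail_def)
  then obtain y0 where y0: "\<And>y. y0 \<le> y \<Longrightarrow> 1 \<le> tail y / tail (2 * y)"
    by (auto simp: eventually_at_top_linorder)
  define z where "z = max y0 \<bar>x\<bar> + 1"
  have "y0 \<le> z" by (simp add: z_def)
  then have "tail (2 * z) \<noteq> 0" using y0 by fastforce
  then have "0 < tail (2 * z)" using tail_nonneg[of "2 * z"] by linarith
  also have "tail (2 * z) \<le> tail x" by (rule tail_antimono) (auto simp: z_def)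
  finally show ?thesis .
qed

lemma tail_0: "tail 0 = 1"
proof -
  have "emeasure nu {..0} = (\<integral>\<^sup>+ x. nu_density x * indicator {..0} x \<partial>lborel)"
    by (rule emeasure_nu) simp
  also have "\<dots> = (\<integral>\<^sup>+ x. (0 :: ennreal) \<partial>(lborel :: real measure))"
    by (intro nn_integral_cong) (simp add: nu_density_def indicator_def)
  finally have "emeasure nu {..0} = 0" by simp
  then have "cdf nu 0 = 0" by (simp add: cdf_def2 measure_def)
  then show ?thesis by (simp add: tail_eq_1_minus_cdf)
qed

lemma nu_cdf_add_tail:
  assumes "0 < x"
  shows "nu_cdf x + tail x = 1"
proof -
  have "{0<..} = {0<..<x} \<union> ({x} \<union> {x<..})" using assms by auto
  then have "tail 0 = measure nu ({0<..<x} \<union> ({x} \<union> {x<..}))" by (simp add: tail_def)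
  also have "\<dots> = nu_cdf x + measure nu ({x} \<union> {x<..})"
    unfolding nu_cdf_def by (rule nu.finite_measure_Union) auto
  also have "measure nu ({x} \<union> {x<..}) = measure nu {x} + tail x"
    unfolding tail_def by (rule nu.finite_measure_Union) auto
  finally have "tail 0 = nu_cdf x + measure nu {x} + tail x" by simp
  moreover have "measure nu {x} = 0"
    using measure_nu_le_length[of "{x}" x x] by (simp add: antisym)
  ultimately show ?thesis by (simp add: tail_0)
qed

lemma nu_cdf_mono: "x \<le> y \<Longrightarrow> nu_cdf x \<le> nu_cdf y"
  unfolding nu_cdf_def by (intro nu.finite_measure_mono) auto

lemma nu_cdf_strict_mono:
  assumes "0 \<le> x" "x < y"
  shows "nu_cdf x < nu_cdf y"
proof -
  have "nu_cdf x + measure nu {x<..<y} = measure nu ({0<..<x} \<union> {x<..<y})"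
    unfolding nu_cdf_def by (intro nu.finite_measure_Union[symmetric]) auto
  also have "\<dots> \<le> nu_cdf y"
    unfolding nu_cdf_def by (intro nu.finite_measure_mono) (use assms in auto)
  finally have "nu_cdf x + measure nu {x<..<y} \<le> nu_cdf y" .
  moreover have "0 < (y - x) * measure muS {y<..} / mean_of muS"
    using assms mu_unbounded mean_pos by auto
  ultimately show ?thesis using measure_nu_Ioo_ge[OF assms(2,1)] by linarith
qed

lemma continuous_on_nu_cdf: "continuous_on {0..} nu_cdf"
proof (rule lipschitz_on_continuous_on)
  have incr: "nu_cdf y - nu_cdf x \<le> (y - x) / mean_of muS" if "0 \<le> x" "x \<le> y" for x y
  proof -
    have "nu_cdf y \<le> measure nu ({0<..<x} \<union> {x..y})"
      unfolding nu_cdf_def by (intro nu.finite_measure_mono) auto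
    also have "\<dots> = nu_cdf x + measure nu {x..y}"
      unfolding nu_cdf_def by (rule nu.finite_measure_Union) auto
    finally show ?thesis using measure_nu_le_length[of "{x..y}" x y] that by simp
  qed
  show "(1 / mean_of muS)-lipschitz_on {0..} nu_cdf"
  proof (rule lipschitz_onI)
    fix x y :: real assume "x \<in> {0..}" "y \<in> {0..}"
    then show "dist (nu_cdf x) (nu_cdf y) \<le> 1 / mean_of muS * dist x y"
      using incr[of x y] incr[of y x] nu_cdf_mono[of x y] nu_cdf_mono[of y x]
      by (cases "x \<le> y") (auto simp: dist_real_def abs_if)
  qed (use mean_pos in auto)
qed

lemma psi_of_unique_existence:
  assumes "0 < u" "u < 1"
  shows "\<exists>!s. 0 < s \<and> nu_cdf s = u"
proof -
  have "eventually (\<lambda>y. tail y < 1 - u) at_top"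
    using tail_tendsto_0 assms by (intro order_tendstoD) auto
  then obtain y0 where y0: "\<And>y. y0 \<le> y \<Longrightarrow> tail y < 1 - u"
    by (auto simp: eventually_at_top_linorder)
  define y where "y = max y0 1"
  have y: "1 \<le> y" "tail y < 1 - u" using y0[of y] by (auto simp: y_def)
  then have "u < nu_cdf y" using nu_cdf_add_tail[of y] by simp
  moreover have "nu_cdf 0 = 0" by (simp add: nu_cdf_def)
  moreover have "continuous_on {0..y} nu_cdf"
    using continuous_on_nu_cdf by (rule continuous_on_subset) auto
  ultimately obtain s where s: "0 \<le> s" "s \<le> y" "nu_cdf s = u"
    using IVT'[of nu_cdf 0 u y] assms y by auto
  then have "0 < s" using \<open>nu_cdf 0 = 0\<close> assms by (cases "s = 0") auto
  show ?thesis
  proof (rule ex1I[of _ s])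
    fix s' assume s': "0 < s' \<and> nu_cdf s' = u"
    show "s' = s"
    proof (rule ccontr)
      assume "s' \<noteq> s"
      then consider "s' < s" | "s < s'" by linarith
      then show False
        using s s' \<open>0 < s\<close> nu_cdf_strict_mono[of s' s] nu_cdf_strict_mono[of s s'] by cases auto
    qed
  qed (use s \<open>0 < s\<close> in auto)
qed

lemma psi_of_eq:
  assumes "0 < u" "u < 1"
  obtains s where "0 < s" "nu_cdf s = u" "psi_of nu u = ereal s"
proof -
  obtain s where s: "0 < s" "nu_cdf s = u"
    using psi_of_unique_existence[OF assms] by auto
  have "(THE s. 0 < s \<and> measure nu {0<..<s} = u) = s"
    using psi_of_unique_existence[OF assms] s unfolding nu_cdf_def[symmetric]
    by (intro the1_equality) auto
  then show ?thesis using that s assms by (simp add: psi_of_def nu_cdf_def)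
qed

lemma psi_of_le_iff:
  assumes "0 < x"
  shows "psi_of nu u \<le> ereal x \<longleftrightarrow> u \<le> nu_cdf x"
proof -
  consider "u \<le> 0" | "1 \<le> u" | "0 < u" "u < 1" by linarith
  then show ?thesis
  proof cases
    case 1
    moreover have "0 \<le> nu_cdf x" by (simp add: nu_cdf_def)
    ultimately show ?thesis using assms by (simp add: psi_of_def)
  next
    case 2
    then show ?thesis using nu_cdf_add_tail[OF assms] tail_pos[of x] by (auto simp: psi_of_def)
  next
    case 3
    then obtain s where s: "0 < s" "nu_cdf s = u" "psi_of nu u = ereal s"
      by (rule psi_of_eq)
    moreover have "s \<le> x \<longleftrightarrow> nu_cdf s \<le> nu_cdf x"
      using nu_cdf_mono[of s x] nu_cdf_strict_mono[of x s] assms by (auto simp: not_le[symmetric])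
    ultimately show ?thesis by simp
  qed
qed

lemma psi_of_nonneg: "0 \<le> psi_of nu u"
proof (cases "0 < u \<and> u < 1")
  case True
  then obtain s where "0 < s" "psi_of nu u = ereal s" by (metis psi_of_eq)
  then show ?thesis by simp
qed (auto simp: psi_of_def)

lemma psi_of_mono: "u \<le> v \<Longrightarrow> psi_of nu u \<le> psi_of nu v"
proof -
  assume uv: "u \<le> v"
  consider "v \<le> 0" | "1 \<le> v" | "0 < v" "v < 1" by linarith
  then show ?thesis
  proof cases
    case 3
    then obtain s where s: "0 < s" "nu_cdf s = v" "psi_of nu v = ereal s"
      by (rule psi_of_eq)
    then show ?thesis using psi_of_le_iff[OF s(1), of u] uv by simp
  qed (use uv in \<open>simp_all add: psi_of_def\<close>)
qed

definition capped_psi :: "real \<Rightarrow> real \<Rightarrow> real" where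
  "capped_psi c u = real_of_ereal (min (psi_of nu u / ereal c) 1)"

lemma psi_of_divide_nonneg: "0 < c \<Longrightarrow> 0 \<le> psi_of nu u / ereal c"
  using ereal_divide_right_mono[OF psi_of_nonneg[of u], of "ereal c"] by simp

lemma capped_psi_bounds: "0 < c \<Longrightarrow> 0 \<le> capped_psi c u \<and> capped_psi c u \<le> 1"
  using real_of_ereal_positive_mono[of "min (psi_of nu u / ereal c) 1" 1] psi_of_divide_nonneg[of c u]
  by (auto simp: capped_psi_def real_of_ereal_pos)

lemma capped_psi_mono:
  assumes "0 < c" "u \<le> v"
  shows "capped_psi c u \<le> capped_psi c v"
  unfolding capped_psi_def
  using assms psi_of_divide_nonneg ereal_divide_right_mono[OF psi_of_mono[OF assms(2)], of "ereal c"]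
  by (intro real_of_ereal_positive_mono) (auto simp: min_def)

lemma capped_psi_le:
  assumes c: "0 < c" and s: "0 < s" and u: "tail (c * s) \<le> 1 - u"
  shows "capped_psi c u \<le> s"
proof -
  have psi: "psi_of nu u \<le> ereal (c * s)"
    using psi_of_le_iff[of "c * s" u] nu_cdf_add_tail[of "c * s"] c s u by simp
  have "psi_of nu u / ereal c \<le> ereal s"
  proof (cases "psi_of nu u")
    case (real r)
    then have "r / c \<le> s" using psi c by (simp add: divide_le_eq mult.commute)
    then show ?thesis using real c by simp
  qed (use psi c psi_of_nonneg[of u] in auto)
  then have "min (psi_of nu u / ereal c) 1 \<le> ereal s"
    by (simp add: min.coboundedI1)
  then have "real_of_ereal (min (psi_of nu u / ereal c) 1) \<le> real_of_ereal (ereal s)"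
    using psi_of_divide_nonneg[OF c] by (intro real_of_ereal_positive_mono) auto
  then show ?thesis by (simp add: capped_psi_def)
qed

lemma capped_psi_gt:
  assumes c: "0 < c" and s: "0 < s" "s < 1" and u: "1 - u < tail (c * s)"
  shows "s < capped_psi c u"
proof -
  have psi: "\<not> psi_of nu u \<le> ereal (c * s)"
    using psi_of_le_iff[of "c * s" u] nu_cdf_add_tail[of "c * s"] c s u by simp
  have "ereal s < psi_of nu u / ereal c"
  proof (cases "psi_of nu u")
    case (real r)
    then have "s < r / c" using psi c by (simp add: less_divide_eq mult.commute)
    then show ?thesis using real c by simp
  qed (use c psi_of_nonneg[of u] in auto)
  then have "ereal s < min (psi_of nu u / ereal c) 1" using s by simp
  moreover have "min (psi_of nu u / ereal c) 1 \<le> 1" by simp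
  ultimately show ?thesis
    unfolding capped_psi_def by (cases "min (psi_of nu u / ereal c) 1") auto
qed

lemma capped_psi_window:
  assumes "0 < c" "0 < s'" "s' < 1" "0 < s"
    and "tail (c * s) \<le> 1 - u" "1 - u < tail (c * s')"
  shows "s' < capped_psi c u \<and> capped_psi c u \<le> s"
  using capped_psi_le[of c s u] capped_psi_gt[of c s' u] assms by simp

lemma a_pos:
  assumes l: "l \<in> {0<..1}"
  shows "0 < a l"
proof (rule ccontr)
  assume "\<not> 0 < a l"
  then have "l * a l \<le> 0" using l by (auto simp: mult_nonneg_nonpos)
  moreover have "tail 0 \<le> tail (a l)" using \<open>\<not> 0 < a l\<close> by (intro tail_antimono) auto
  ultimately show False using a_eq[OF l] tail_0 by (simp add: tail_def)
qed

lemma filterlim_a_at_top: "filterlim a at_top (at_right 0)"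
proof (subst filterlim_at_top_gt[where c = 0], intro allI impI)
  fix B :: real assume B: "0 < B"
  show "eventually (\<lambda>l. B \<le> a l) (at_right 0)"
    unfolding eventually_at_right_field
  proof (intro exI[of _ "min 1 (tail B / B)"] conjI allI impI)
    show "0 < min 1 (tail B / B)" using B tail_pos[of B] by auto
    fix l :: real assume l: "0 < l" "l < min 1 (tail B / B)"
    show "B \<le> a l"
    proof (rule ccontr)
      assume "\<not> B \<le> a l"
      then have "tail B \<le> tail (a l)" by (intro tail_antimono) auto
      also have "\<dots> = l * a l" using a_eq[of l] l by (simp add: tail_def)
      also have "\<dots> \<le> l * B" using \<open>\<not> B \<le> a l\<close> l by (intro mult_left_mono) auto
      also have "\<dots> < tail B" using l B by (simp add: less_divide_eq)
      finally show False by simp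
    qed
  qed
qed

lemma tail_ratio_scaled_at_top:
  assumes "0 < u" "u < v"
  shows "filterlim (\<lambda>l. tail (a l * u) / tail (a l * v)) at_top (at_right 0)"
proof -
  have "filterlim (\<lambda>x. tail x / tail ((v / u) * x)) at_top at_top"
    using tail_ratio_at_top[of "v / u"] assms by (simp add: tail_def)
  moreover have "filterlim (\<lambda>l. a l * u) at_top (at_right 0)"
    by (rule filterlim_at_top_mult_tendsto_pos[OF tendsto_const assms(1) filterlim_a_at_top])
  ultimately have "filterlim (\<lambda>l. tail (a l * u) / tail ((v / u) * (a l * u))) at_top (at_right 0)"
    by (rule filterlim_compose[where g = "\<lambda>x. tail x / tail ((v / u) * x)"])
  moreover have "(v / u) * (a l * u) = a l * v" for l using assms by simp
  ultimately show ?thesis by simp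
qed

lemma tail_ratio_scaled_tendsto_0:
  "0 < u \<Longrightarrow> u < v \<Longrightarrow> ((\<lambda>l. tail (a l * v) / tail (a l * u)) \<longlongrightarrow> 0) (at_right 0)"
  using tendsto_inverse_0_at_top[OF tail_ratio_scaled_at_top] by simp

lemma tail_scaled_tendsto_0: "0 < t \<Longrightarrow> ((\<lambda>l. tail (a l * t)) \<longlongrightarrow> 0) (at_right 0)"
  using filterlim_compose[OF tail_tendsto_0
      filterlim_at_top_mult_tendsto_pos[OF tendsto_const _ filterlim_a_at_top]]
  by simp

lemma sets_occupied: "{\<omega>\<in>space M. occupied T1 X c t i \<omega>} \<in> sets M"
proof -
  have "{\<omega>\<in>space M. occupied T1 X c t i \<omega>} =
      {\<omega>\<in>space M. \<exists>k::nat. 1 \<le> k \<and> T1 i \<omega> + (\<Sum>j\<in>{1..<k}. X i j \<omega>) \<le> c * t}"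
    by (auto simp: occupied_def sr_time_def)
  also have "\<dots> \<in> sets M"
  proof (intro sets.sets_Collect_countable_Ex)
    fix k :: nat
    show "{\<omega>\<in>space M. 1 \<le> k \<and> T1 i \<omega> + (\<Sum>j\<in>{1..<k}. X i j \<omega>) \<le> c * t} \<in> sets M"
    proof (cases "1 \<le> k")
      case True
      have [measurable]: "(\<lambda>\<omega>. T1 i \<omega> + (\<Sum>j\<in>{1..<k}. X i j \<omega>)) \<in> borel_measurable M"
        by (intro borel_measurable_add random_variable_T1 borel_measurable_sum random_variable_X) auto
      show ?thesis using True by simp
    qed simp
  qed
  finally show ?thesis .
qed

lemma borel_measurable_K_frac: "(\<lambda>\<omega>. K_frac T1 X c n t \<omega>) \<in> borel_measurable M"
proof -
  define A where "A i = {\<omega>\<in>space M. occupied T1 X c t i \<omega>}" for i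
  have "K_frac T1 X c n t \<omega> = (\<Sum>i\<in>{-int n..int n}. indicator (A i) \<omega>) / real (2 * n + 1)"
    if "\<omega> \<in> space M" for \<omega>
    using that by (simp add: K_frac_eq_card_occupied A_def indicator_def Int_def)
  moreover have "(\<lambda>\<omega>. (\<Sum>i\<in>{-int n..int n}. indicator (A i) \<omega>) / real (2 * n + 1)) \<in> borel_measurable M"
    using sets_occupied unfolding A_def by measurable
  ultimately show ?thesis by (subst measurable_cong) auto
qed

lemma U_proc_eq_capped_psi: "U_proc nu T1 X c n t \<omega> = capped_psi c (K_frac T1 X c n t \<omega>)"
  by (simp add: U_proc_def capped_psi_def)

lemma borel_measurable_U_proc:
  assumes "0 < c"
  shows "(\<lambda>\<omega>. U_proc nu T1 X c n t \<omega>) \<in> borel_measurable M"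
proof -
  have "capped_psi c \<in> borel_measurable borel"
    using capped_psi_mono[OF assms] by (intro borel_measurable_mono) (auto simp: mono_def)
  then show ?thesis
    unfolding U_proc_eq_capped_psi using borel_measurable_K_frac by measurable
qed

lemma U_proc_mono:
  assumes c: "0 < c" and "t \<le> t'"
  shows "U_proc nu T1 X c n t \<omega> \<le> U_proc nu T1 X c n t' \<omega>"
proof -
  have "card {i\<in>{-int n..int n}. occupied T1 X c t i \<omega>} \<le> card {i\<in>{-int n..int n}. occupied T1 X c t' i \<omega>}"
    using occupied_mono[OF c \<open>t \<le> t'\<close>]
    by (intro card_mono[OF finite_subset[OF _ finite_atLeastAtMost_int]]) auto
  then have "K_frac T1 X c n t \<omega> \<le> K_frac T1 X c n t' \<omega>"
    unfolding K_frac_eq_card_occupied by (intro divide_right_mono) auto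
  then show ?thesis unfolding U_proc_eq_capped_psi by (rule capped_psi_mono[OF c])
qed

lemma sets_U_sup_gt:
  assumes c: "0 < c" and T: "0 < T"
  shows "{\<omega>\<in>space M. \<epsilon> < (SUP t\<in>{0..T}. \<bar>U_proc nu T1 X c n t \<omega> - min t 1\<bar>)} \<in> sets M"
proof -
  define D where "D = {0, T} \<union> (\<rat> \<inter> {0..T})"
  have "\<epsilon> < (SUP t\<in>{0..T}. \<bar>U_proc nu T1 X c n t \<omega> - min t 1\<bar>) \<longleftrightarrow>
      (\<exists>d\<in>D. \<epsilon> < \<bar>U_proc nu T1 X c n d \<omega> - min d 1\<bar>)" for \<omega>
  proof -
    have "\<bar>capped_psi c u - min x 1\<bar> \<le> 1" if "0 \<le> x" for u x
      using capped_psi_bounds[OF c, of u] that unfolding min_def by (auto simp: abs_le_iff)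
    then have "bdd_above ((\<lambda>t. \<bar>U_proc nu T1 X c n t \<omega> - min t 1\<bar>) ` {0..T})"
      by (intro bdd_aboveI[of _ 1]) (auto simp: U_proc_eq_capped_psi)
    then have "\<epsilon> < (SUP t\<in>{0..T}. \<bar>U_proc nu T1 X c n t \<omega> - min t 1\<bar>) \<longleftrightarrow>
        (\<exists>t\<in>{0..T}. \<epsilon> < \<bar>U_proc nu T1 X c n t \<omega> - min t 1\<bar>)"
      using T by (subst less_cSUP_iff) auto
    also have "\<dots> \<longleftrightarrow> (\<exists>d\<in>D. \<epsilon> < \<bar>U_proc nu T1 X c n d \<omega> - min d 1\<bar>)"
    proof
      assume "\<exists>t\<in>{0..T}. \<epsilon> < \<bar>U_proc nu T1 X c n t \<omega> - min t 1\<bar>"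
      moreover have "mono (\<lambda>t. U_proc nu T1 X c n t \<omega>)"
        using U_proc_mono[OF c] by (simp add: mono_def)
      ultimately show "\<exists>d\<in>D. \<epsilon> < \<bar>U_proc nu T1 X c n d \<omega> - min d 1\<bar>"
        unfolding D_def using mono_abs_diff_min_gt_rational_witness by blast
    next
      assume "\<exists>d\<in>D. \<epsilon> < \<bar>U_proc nu T1 X c n d \<omega> - min d 1\<bar>"
      moreover have "D \<subseteq> {0..T}" using T by (auto simp: D_def)
      ultimately show "\<exists>t\<in>{0..T}. \<epsilon> < \<bar>U_proc nu T1 X c n t \<omega> - min t 1\<bar>" by blast
    qed
    finally show ?thesis .
  qed
  moreover have "{\<omega>\<in>space M. \<exists>d\<in>D. \<epsilon> < \<bar>U_proc nu T1 X c n d \<omega> - min d 1\<bar>} \<in> sets M"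
    using borel_measurable_U_proc[OF c]
    by (intro sets.sets_Collect_countable_Ex') (auto simp: D_def intro: countable_rat)
  ultimately show ?thesis by simp
qed

lemma sets_cluster_event:
  "{\<omega>\<in>space M. C_clus T1 X c t \<omega> \<subseteq> {- int n..int n} \<and> \<bar>V_proc nu T1 X c t \<omega> - t\<bar> < \<epsilon>}
     \<in> sets M"
proof -
  \<comment> \<open>The cluster is an interval containing 0, so whether it stays in \<open>{-n..n}\<close>, and what it is
    if it does, is decided by the sites in \<open>W\<close>.\<close>
  define W where "W = {- (int n + 1)..int n + 1}"
  define good where "good C \<longleftrightarrow> C \<subseteq> {- int n..int n} \<and> \<bar>cluster_value nu c C - t\<bar> < \<epsilon>" for C
  have "good (zero_cluster b) \<longleftrightarrow> good (zero_cluster (\<lambda>i. i \<in> W \<and> b i))" for b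
  proof (cases "zero_cluster b \<subseteq> {- int n..int n}")
    case True
    then have "zero_cluster b \<inter> {- (int n + 1)..int n + 1} = zero_cluster b" by auto
    then show ?thesis unfolding W_def zero_cluster_restrict_window by simp
  next
    case False
    then show ?thesis
      using zero_cluster_subset_iff_window[of "int n" b]
      unfolding good_def W_def zero_cluster_restrict_window by simp
  qed
  then have "{\<omega>\<in>space M. C_clus T1 X c t \<omega> \<subseteq> {- int n..int n} \<and> \<bar>V_proc nu T1 X c t \<omega> - t\<bar> < \<epsilon>}
      = {\<omega>\<in>space M. good (zero_cluster (\<lambda>i. i \<in> W \<and> occupied T1 X c t i \<omega>))}"
    by (auto simp: V_proc_eq_cluster_value C_clus_eq_zero_cluster good_def[symmetric])
  also have "\<dots> \<in> sets M"
    by (rule sets_Collect_finite_config) (auto simp: W_def sets_occupied)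
  finally show ?thesis .
qed

lemma AE_interarrivals_nonneg: "AE \<omega> in M. \<forall>i k. 1 \<le> k \<longrightarrow> 0 \<le> X i k \<omega>"
proof -
  interpret mu: prob_space muS by (rule mu_prob)
  have "AE \<omega> in M. 0 \<le> X i k \<omega>" if k: "1 \<le> k" for i k
  proof -
    have "AE x in distr M borel (X i k). x \<in> {0<..}"
      unfolding X_distr[OF k] using mu_pos by (intro mu.AE_prob_1) (simp add: mu_sets)
    then have "AE \<omega> in M. X i k \<omega> \<in> {0<..}" by (rule AE_distrD[OF random_variable_X[OF k]])
    then show ?thesis by eventually_elim auto
  qed
  then show ?thesis by (auto simp: AE_all_countable)
qed

lemma prob_T1_indep:
  assumes fin: "finite J" and ne: "J \<noteq> {}" and B: "\<And>i. i \<in> J \<Longrightarrow> B i \<in> sets borel"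
  shows "prob (\<Inter>i\<in>J. {\<omega>\<in>space M. T1 i \<omega> \<in> B i}) = (\<Prod>i\<in>J. prob {\<omega>\<in>space M. T1 i \<omega> \<in> B i})"
proof -
  let ?Y = "\<lambda>p. case p of (i, 0) \<Rightarrow> T1 i | (i, Suc k) \<Rightarrow> X i (Suc k)"
  define A where "A p = {\<omega>\<in>space M. T1 (fst p) \<omega> \<in> B (fst p)}" for p :: "int \<times> nat"
  have "indep_sets (\<lambda>p. {?Y p -` A \<inter> space M | A. A \<in> sets borel}) UNIV"
    using indep unfolding indep_vars_def2 by blast
  then have "prob (\<Inter>p\<in>(\<lambda>i. (i, 0)) ` J. A p) = (\<Prod>p\<in>(\<lambda>i. (i, 0)) ` J. prob (A p))"
    by (rule indep_setsD) (use fin ne B in \<open>auto simp: A_def\<close>)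
  moreover have "inj_on (\<lambda>i. (i, 0::nat)) J" by (auto simp: inj_on_def)
  ultimately show ?thesis by (simp add: prod.reindex A_def)
qed

lemma prob_T1_gt: "prob {\<omega>\<in>space M. x < T1 i \<omega>} = tail x"
  using prob_T1_in[of "{x<..}" i] by (simp add: tail_def)

lemma prob_all_T1_le:
  assumes "finite J"
  shows "prob {\<omega>\<in>space M. \<forall>j\<in>J. T1 j \<omega> \<le> x} = (1 - tail x) ^ card J"
proof (cases "J = {}")
  case False
  have le: "prob {\<omega>\<in>space M. T1 j \<omega> \<le> x} = 1 - tail x" for j
    using prob_T1_in[of "{..x}" j] by (simp add: tail_eq_1_minus_cdf cdf_def2)
  have "{\<omega>\<in>space M. \<forall>j\<in>J. T1 j \<omega> \<le> x} = (\<Inter>j\<in>J. {\<omega>\<in>space M. T1 j \<omega> \<in> {..x}})"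
    using False by auto
  then show ?thesis using prob_T1_indep[OF assms False, of "\<lambda>_. {..x}"] by (simp add: le)
qed (simp add: prob_space)

lemma prob_pair_T1_gt:
  assumes "i \<noteq> j"
  shows "prob ({\<omega>\<in>space M. x < T1 i \<omega>} \<inter> {\<omega>\<in>space M. x < T1 j \<omega>}) = (tail x)\<^sup>2"
  using prob_T1_indep[of "{i, j}" "\<lambda>_. {x<..}"] assms
  by (simp add: prob_T1_gt power2_eq_square Int_def conj_commute)

subsection \<open>Part (i): the fraction of occupied sites\<close>

lemma U_proc_bounds: "0 < c \<Longrightarrow> 0 \<le> U_proc nu T1 X c n t \<omega> \<and> U_proc nu T1 X c n t \<omega> \<le> 1"
  unfolding U_proc_eq_capped_psi by (rule capped_psi_bounds)

lemma K_frac_eq_vacant_fraction: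
  assumes X: "\<forall>i k. 1 \<le> k \<longrightarrow> 0 \<le> X i k \<omega>"
  shows "K_frac T1 X c n t \<omega> = 1 - real (card {i\<in>{-int n..int n}. c * t < T1 i \<omega>}) / real (2 * n + 1)"
proof -
  let ?I = "{-int n..int n}"
  have "occupied T1 X c t i \<omega> \<longleftrightarrow> T1 i \<omega> \<le> c * t" for i
    using occupied_iff_T1_le[of X i \<omega>] X by simp
  then have "{i\<in>?I. occupied T1 X c t i \<omega>} = {i\<in>?I. T1 i \<omega> \<le> c * t}"
    by auto
  moreover have "card {i\<in>?I. T1 i \<omega> \<le> c * t} + card {i\<in>?I. c * t < T1 i \<omega>}
      = card ({i\<in>?I. T1 i \<omega> \<le> c * t} \<union> {i\<in>?I. c * t < T1 i \<omega>})"
    by (rule card_Un_disjoint[symmetric]) (auto intro: finite_subset[OF _ finite_atLeastAtMost_int])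
  moreover have "{i\<in>?I. T1 i \<omega> \<le> c * t} \<union> {i\<in>?I. c * t < T1 i \<omega>} = ?I"
    by auto
  ultimately show ?thesis
    unfolding K_frac_eq_card_occupied by (simp add: field_simps)
qed

lemma U_proc_window:
  fixes n :: nat and c t :: real and \<omega> :: 'a
  defines "Z \<equiv> real (card {i\<in>{-int n..int n}. c * t < T1 i \<omega>})" and "N \<equiv> real (2 * n + 1)"
  assumes X: "\<forall>i k. 1 \<le> k \<longrightarrow> 0 \<le> X i k \<omega>" and c: "0 < c"
    and s: "0 < s'" "s' < 1" "0 < s"
    and Z: "N * tail (c * s) \<le> Z" "Z < N * tail (c * s')"
  shows "s' < U_proc nu T1 X c n t \<omega> \<and> U_proc nu T1 X c n t \<omega> \<le> s"
proof -
  have "0 < N" by (simp add: N_def)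
  then have "tail (c * s) \<le> 1 - K_frac T1 X c n t \<omega>" "1 - K_frac T1 X c n t \<omega> < tail (c * s')"
    using Z unfolding K_frac_eq_vacant_fraction[OF X] Z_def N_def
    by (simp_all add: le_divide_eq divide_less_eq mult.commute)
  then show ?thesis
    unfolding U_proc_eq_capped_psi by (intro capped_psi_window c s)
qed

lemma U_deviation_prob_le:
  fixes n :: nat and c t :: real
  defines "q \<equiv> tail (c * t)" and "N \<equiv> real (2 * n + 1)"
  assumes c: "0 < c" and s: "0 < s'" "s' < 1" "0 < s" and \<delta>: "t - \<delta> < s'" "s < t + \<delta>"
    and q: "tail (c * s) < q" "q < tail (c * s')"
  shows "prob {\<omega>\<in>space M. \<delta> \<le> \<bar>U_proc nu T1 X c n t \<omega> - t\<bar>}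
     \<le> inverse (N * q) * ((1 / (1 - tail (c * s) / q))\<^sup>2 + (q / tail (c * s') / (1 - q / tail (c * s')))\<^sup>2)"
proof -
  define I where "I = {-int n..int n}"
  define A where "A i = {\<omega>\<in>space M. c * t < T1 i \<omega>}" for i
  define Z where "Z \<omega> = (\<Sum>i\<in>I. indicator (A i) \<omega> :: real)" for \<omega>
  define B where "B r = {\<omega>\<in>space M. r \<le> \<bar>Z \<omega> - N * q\<bar>}" for r
  have N: "0 < N" "real (card I) = N" by (simp_all add: N_def I_def)
  have qpos: "0 < q" by (simp add: q_def tail_pos)
  have A_ev: "A i \<in> events" for i by (simp add: A_def)
  have B_ev: "B r \<in> events" for r
    unfolding B_def Z_def using A_ev by measurable
  have B_le: "prob (B r) \<le> N * q / r\<^sup>2" if "0 < r" for r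
    using count_deviation_prob_le[of I A q r] that qpos A_ev unfolding B_def Z_def N(2)[symmetric]
    by (simp add: I_def A_def q_def prob_T1_gt prob_pair_T1_gt)
  define r1 r2 where "r1 = N * (q - tail (c * s))" and "r2 = N * (tail (c * s') - q)"
  have "AE \<omega> in M. \<omega> \<in> {\<omega>\<in>space M. \<delta> \<le> \<bar>U_proc nu T1 X c n t \<omega> - t\<bar>} \<longrightarrow> \<omega> \<in> B r1 \<union> B r2"
    using AE_interarrivals_nonneg
  proof eventually_elim
    fix \<omega> assume X: "\<forall>i k. 1 \<le> k \<longrightarrow> 0 \<le> X i k \<omega>"
    show "\<omega> \<in> {\<omega>\<in>space M. \<delta> \<le> \<bar>U_proc nu T1 X c n t \<omega> - t\<bar>} \<longrightarrow> \<omega> \<in> B r1 \<union> B r2"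
    proof (rule impI, rule ccontr)
      assume \<omega>: "\<omega> \<in> {\<omega>\<in>space M. \<delta> \<le> \<bar>U_proc nu T1 X c n t \<omega> - t\<bar>}" and "\<omega> \<notin> B r1 \<union> B r2"
      then have "N * tail (c * s) \<le> Z \<omega>" "Z \<omega> < N * tail (c * s')"
        by (auto simp: B_def r1_def r2_def abs_less_iff algebra_simps)
      moreover have "Z \<omega> = real (card {i\<in>I. c * t < T1 i \<omega>})"
        using \<omega> by (simp add: Z_def A_def I_def indicator_def Int_def)
      ultimately have "s' < U_proc nu T1 X c n t \<omega> \<and> U_proc nu T1 X c n t \<omega> \<le> s"
        using U_proc_window[OF X c s, of n t] unfolding I_def N_def by simp
      then show False using \<omega> \<delta> by auto
    qed
  qed
  then have "prob {\<omega>\<in>space M. \<delta> \<le> \<bar>U_proc nu T1 X c n t \<omega> - t\<bar>} \<le> prob (B r1 \<union> B r2)"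
    by (rule finite_measure_mono_AE) (use B_ev in auto)
  also have "\<dots> \<le> N * q / r1\<^sup>2 + N * q / r2\<^sup>2"
    using measure_Un_le[OF B_ev B_ev, of r1 r2] B_le[of r1] B_le[of r2] q N
    by (simp add: r1_def r2_def)
  also have "\<dots> = inverse (N * q) * ((1 / (1 - tail (c * s) / q))\<^sup>2 + (q / tail (c * s') / (1 - q / tail (c * s')))\<^sup>2)"
    unfolding r1_def r2_def using two_sided_deviation_bound_eq[OF N(1) qpos q] .
  finally show ?thesis .
qed

lemma window_tail_at_top:
  assumes "0 \<le> t" "t < 1"
  shows "filterlim (\<lambda>l. real (2 * m l + 1) * tail (a l * t)) at_top (at_right 0)"
proof (rule filterlim_at_top_mono)
  show "filterlim (\<lambda>l. real (m l) * tail (a l * t)) at_top (at_right 0)"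
    using m_tail_at_top[of t] assms by (simp add: tail_def)
  show "eventually (\<lambda>l. real (m l) * tail (a l * t) \<le> real (2 * m l + 1) * tail (a l * t)) (at_right 0)"
    by (intro always_eventually allI mult_right_mono) (auto simp: tail_nonneg)
qed

lemma U_deviation_tendsto_0:
  assumes t: "0 < t" "t < 1" and \<delta>: "0 < \<delta>"
  shows "((\<lambda>l. prob {\<omega>\<in>space M. \<delta> \<le> \<bar>U_proc nu T1 X (a l) (m l) t \<omega> - t\<bar>}) \<longlongrightarrow> 0) (at_right 0)"
proof -
  define s s' where "s = t + \<delta> / 2" and "s' = max (t / 2) (t - \<delta> / 2)"
  have s: "0 < s'" "s' < 1" "0 < s" "t - \<delta> < s'" "s < t + \<delta>" "s' < t" "t < s"
    using t \<delta> by (auto simp: s_def s'_def)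
  define q where "q l = tail (a l * t)" for l
  define R1 R2 where "R1 l = tail (a l * s) / q l" and "R2 l = q l / tail (a l * s')" for l
  define B where "B l = inverse (real (2 * m l + 1) * q l) * ((1 / (1 - R1 l))\<^sup>2 + (R2 l / (1 - R2 l))\<^sup>2)"
    for l
  have R1: "(R1 \<longlongrightarrow> 0) (at_right 0)"
    unfolding R1_def q_def using s t by (intro tail_ratio_scaled_tendsto_0) auto
  have R2: "(R2 \<longlongrightarrow> 0) (at_right 0)"
    unfolding R2_def q_def using s by (intro tail_ratio_scaled_tendsto_0) auto
  have Nq: "filterlim (\<lambda>l. real (2 * m l + 1) * q l) at_top (at_right 0)"
    unfolding q_def using t by (intro window_tail_at_top) auto
  have "(B \<longlongrightarrow> 0 * ((1 / (1 - 0))\<^sup>2 + (0 / (1 - 0))\<^sup>2)) (at_right 0)"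
    unfolding B_def by (intro tendsto_intros tendsto_inverse_0_at_top Nq R1 R2) auto
  then have B: "(B \<longlongrightarrow> 0) (at_right 0)" by simp
  have le_B: "eventually (\<lambda>l. prob {\<omega>\<in>space M. \<delta> \<le> \<bar>U_proc nu T1 X (a l) (m l) t \<omega> - t\<bar>} \<le> B l)
      (at_right 0)"
    using order_tendstoD(2)[OF R1 zero_less_one] order_tendstoD(2)[OF R2 zero_less_one]
      eventually_unit_interval_at_right_0
  proof eventually_elim
    case (elim l)
    have "0 < q l" "0 < tail (a l * s')" by (simp_all add: q_def tail_pos)
    then have "tail (a l * s) < q l" "q l < tail (a l * s')"
      using elim(1,2) by (simp_all add: R1_def R2_def divide_less_eq)
    then show ?case
      using U_deviation_prob_le[OF a_pos[OF elim(3)] s(1-5), where n = "m l"]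
      by (simp add: B_def R1_def R2_def q_def)
  qed
  show ?thesis
    by (rule tendsto_sandwich[OF _ le_B tendsto_const B]) simp
qed

lemma U_sup_deviation_subset_grid:
  fixes K :: nat
  assumes c: "0 < c" and T: "0 \<le> T" and K: "2 \<le> K" "1 / real K \<le> \<delta>" and \<epsilon>: "2 * \<delta> \<le> \<epsilon>"
  shows "{\<omega>\<in>space M. \<epsilon> < (SUP t\<in>{0..T}. \<bar>U_proc nu T1 X c n t \<omega> - min t 1\<bar>)}
    \<subseteq> (\<Union>j\<in>{1..K-1}. {\<omega>\<in>space M. \<delta> \<le> \<bar>U_proc nu T1 X c n (real j / real K) \<omega> - real j / real K\<bar>})"
proof
  fix \<omega> assume \<omega>: "\<omega> \<in> {\<omega>\<in>space M. \<epsilon> < (SUP t\<in>{0..T}. \<bar>U_proc nu T1 X c n t \<omega> - min t 1\<bar>)}"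
  show "\<omega> \<in> (\<Union>j\<in>{1..K-1}. {\<omega>\<in>space M. \<delta> \<le> \<bar>U_proc nu T1 X c n (real j / real K) \<omega> - real j / real K\<bar>})"
  proof (rule ccontr)
    assume "\<not> ?thesis"
    then have grid: "\<forall>j\<in>{1..K-1}. \<bar>U_proc nu T1 X c n (real j / real K) \<omega> - real j / real K\<bar> < \<delta>"
      using \<omega> by (auto simp: not_le)
    have "mono (\<lambda>t. U_proc nu T1 X c n t \<omega>)"
      using U_proc_mono[OF c] by (simp add: mono_def)
    then have "\<bar>U_proc nu T1 X c n t \<omega> - min t 1\<bar> < 2 * \<delta>" if "t \<in> {0..T}" for t
      using mono_abs_diff_min_lt_from_grid[OF _ U_proc_bounds[OF c] K grid] that by simp
    then have "(SUP t\<in>{0..T}. \<bar>U_proc nu T1 X c n t \<omega> - min t 1\<bar>) \<le> \<epsilon>"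
      using T \<epsilon> by (intro cSUP_least) (auto intro: less_imp_le order_trans)
    then show False using \<omega> by simp
  qed
qed

lemma U_sup_deviation_tendsto_0:
  assumes \<epsilon>: "0 < \<epsilon>" and T: "0 < T"
  shows "((\<lambda>l. prob {\<omega>\<in>space M. \<epsilon> < (SUP t\<in>{0..T}. \<bar>U_proc nu T1 X (a l) (m l) t \<omega> - min t 1\<bar>)})
    \<longlongrightarrow> 0) (at_right 0)"
proof -
  define \<delta> where "\<delta> = \<epsilon> / 2"
  define K where "K = max 2 (nat \<lceil>1 / \<delta>\<rceil>)"
  have K: "2 \<le> K" "1 / real K \<le> \<delta>"
  proof -
    have "1 / \<delta> \<le> real K" "0 < real K"
      using real_nat_ceiling_ge[of "1 / \<delta>"] by (auto simp: K_def)
    then show "1 / real K \<le> \<delta>"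
      using \<epsilon> by (simp add: \<delta>_def field_simps)
  qed (simp add: K_def)
  define E where "E l j = {\<omega>\<in>space M. \<delta> \<le> \<bar>U_proc nu T1 X (a l) (m l) (real j / real K) \<omega> - real j / real K\<bar>}"
    for l j
  have lim: "((\<lambda>l. \<Sum>j\<in>{1..K-1}. prob (E l j)) \<longlongrightarrow> 0) (at_right 0)"
    unfolding E_def using K \<epsilon> by (intro tendsto_null_sum U_deviation_tendsto_0) (auto simp: \<delta>_def)
  have le_sum: "eventually (\<lambda>l. prob {\<omega>\<in>space M. \<epsilon> < (SUP t\<in>{0..T}. \<bar>U_proc nu T1 X (a l) (m l) t \<omega> - min t 1\<bar>)}
      \<le> (\<Sum>j\<in>{1..K-1}. prob (E l j))) (at_right 0)"
    using eventually_unit_interval_at_right_0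
  proof eventually_elim
    case (elim l)
    have c: "0 < a l" by (rule a_pos[OF elim])
    have E_ev: "E l j \<in> events" for j
      unfolding E_def using borel_measurable_U_proc[OF c] by measurable
    have "prob {\<omega>\<in>space M. \<epsilon> < (SUP t\<in>{0..T}. \<bar>U_proc nu T1 X (a l) (m l) t \<omega> - min t 1\<bar>)}
        \<le> prob (\<Union>j\<in>{1..K-1}. E l j)"
      using U_sup_deviation_subset_grid[OF c _ K, of T \<epsilon> "m l"] T E_ev
      by (intro finite_measure_mono) (auto simp: E_def \<delta>_def)
    also have "\<dots> \<le> (\<Sum>j\<in>{1..K-1}. prob (E l j))"
      by (rule measure_UNION_le) (auto intro: E_ev)
    finally show ?case .
  qed
  show ?thesis
    by (rule tendsto_sandwich[OF _ le_sum tendsto_const lim]) simp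
qed

subsection \<open>Part (ii): the cluster of the origin\<close>

lemma cluster_value_eq_capped_psi:
  "C \<noteq> {} \<Longrightarrow> finite C \<Longrightarrow> cluster_value nu c C = capped_psi c (1 - 1 / real (card C))"
  by (simp add: cluster_value_def capped_psi_def)

lemma cluster_window:
  fixes k1 k n :: nat
  assumes X: "\<forall>i k. 1 \<le> k \<longrightarrow> 0 \<le> X i k \<omega>" and c: "0 < c"
    and s: "0 < s'" "s' < 1" "0 < s"
    and k1: "1 / tail (c * s') \<le> real k1" and k: "2 * real k - 1 \<le> 1 / tail (c * s)" "k \<le> n"
    and occ: "\<forall>j\<in>{0..int k1}. T1 j \<omega> \<le> c * t"
    and right: "\<exists>j\<in>{1..int k}. c * t < T1 j \<omega>" and left: "\<exists>j\<in>{-int k..-1}. c * t < T1 j \<omega>"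
  shows "C_clus T1 X c t \<omega> \<subseteq> {- int n..int n} \<and> s' < V_proc nu T1 X c t \<omega> \<and> V_proc nu T1 X c t \<omega> \<le> s"
proof -
  define C where "C = C_clus T1 X c t \<omega>"
  have b: "occupied T1 X c t i \<omega> \<longleftrightarrow> T1 i \<omega> \<le> c * t" for i
    using occupied_iff_T1_le[of X i \<omega>] X by simp
  obtain j1 j2 where "j1 \<in> {1..int k}" "\<not> occupied T1 X c t j1 \<omega>"
    "j2 \<in> {-int k..-1}" "\<not> occupied T1 X c t j2 \<omega>"
    using right left by (auto simp: b not_le)
  then have sub: "{0..int k1} \<subseteq> C" "C \<subseteq> {-(int k - 1)..int k - 1}" and "1 \<le> k"
    using zero_cluster_bounds[of k1 "\<lambda>i. occupied T1 X c t i \<omega>"] occ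
    by (auto simp: C_def C_clus_eq_zero_cluster b)
  then have fin: "finite C" and ne: "C \<noteq> {}" by (auto intro: finite_subset)
  have "card {0..int k1} \<le> card C" by (rule card_mono[OF fin sub(1)])
  then have "1 / tail (c * s') < real (card C)" using k1 by simp
  moreover have "card C \<le> card {-(int k - 1)..int k - 1}" by (rule card_mono[OF _ sub(2)]) simp
  then have "real (card C) \<le> 1 / tail (c * s)" using k \<open>1 \<le> k\<close> by (simp add: nat_diff_distrib)
  moreover have "0 < tail (c * s)" "0 < tail (c * s')" "0 < real (card C)"
    using tail_pos fin ne by (auto simp: card_gt_0_iff)
  ultimately have "tail (c * s) \<le> 1 / real (card C)" "1 / real (card C) < tail (c * s')"
    by (simp_all add: field_simps)
  then have "s' < cluster_value nu c C \<and> cluster_value nu c C \<le> s"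
    unfolding cluster_value_eq_capped_psi[OF ne fin] using capped_psi_window[OF c s(1,2,3)] by simp
  then show ?thesis
    using sub(2) k by (auto simp: C_def V_proc_eq_cluster_value)
qed

lemma cluster_event_prob_ge:
  fixes k1 k n :: nat and c t :: real
  defines "q \<equiv> tail (c * t)"
  assumes c: "0 < c" and s: "0 < s'" "s' < 1" "0 < s" and \<epsilon>: "t - \<epsilon> < s'" "s < t + \<epsilon>"
    and k1: "1 / tail (c * s') \<le> real k1" and k: "2 * real k - 1 \<le> 1 / tail (c * s)" "k \<le> n"
  shows "1 - (real (k1 + 1) * q + 2 * (1 - q) ^ k)
    \<le> prob {\<omega>\<in>space M. C_clus T1 X c t \<omega> \<subseteq> {- int n..int n} \<and> \<bar>V_proc nu T1 X c t \<omega> - t\<bar> < \<epsilon>}"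
proof -
  define Good where
    "Good = {\<omega>\<in>space M. C_clus T1 X c t \<omega> \<subseteq> {- int n..int n} \<and> \<bar>V_proc nu T1 X c t \<omega> - t\<bar> < \<epsilon>}"
  define Bad1 where "Bad1 = {\<omega>\<in>space M. \<exists>j\<in>{0..int k1}. c * t < T1 j \<omega>}"
  define Bad2 where "Bad2 = {\<omega>\<in>space M. \<forall>j\<in>{1..int k}. T1 j \<omega> \<le> c * t}"
  define Bad3 where "Bad3 = {\<omega>\<in>space M. \<forall>j\<in>{-int k..-1}. T1 j \<omega> \<le> c * t}"
  have ev: "Good \<in> events" "Bad1 \<in> events" "Bad2 \<in> events" "Bad3 \<in> events"
    unfolding Good_def Bad1_def Bad2_def Bad3_def
    by (auto intro: sets_cluster_event sets.sets_Collect_finite_Ex sets.sets_Collect_finite_All)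
  have "Bad1 = (\<Union>j\<in>{0..int k1}. {\<omega>\<in>space M. c * t < T1 j \<omega>})"
    by (auto simp: Bad1_def)
  then have "prob Bad1 \<le> (\<Sum>j\<in>{0..int k1}. prob {\<omega>\<in>space M. c * t < T1 j \<omega>})"
    by (simp only:) (rule measure_UNION_le, auto)
  then have p1: "prob Bad1 \<le> real (k1 + 1) * q"
    by (simp add: prob_T1_gt q_def add.commute)
  have p23: "prob Bad2 = (1 - q) ^ k" "prob Bad3 = (1 - q) ^ k"
    unfolding Bad2_def Bad3_def q_def by (simp_all add: prob_all_T1_le)
  have "AE \<omega> in M. \<omega> \<in> space M - (Bad1 \<union> Bad2 \<union> Bad3) \<longrightarrow> \<omega> \<in> Good"
    using AE_interarrivals_nonneg
  proof eventually_elim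
    fix \<omega> assume X: "\<forall>i k. 1 \<le> k \<longrightarrow> 0 \<le> X i k \<omega>"
    show "\<omega> \<in> space M - (Bad1 \<union> Bad2 \<union> Bad3) \<longrightarrow> \<omega> \<in> Good"
    proof
      assume \<omega>: "\<omega> \<in> space M - (Bad1 \<union> Bad2 \<union> Bad3)"
      then have "C_clus T1 X c t \<omega> \<subseteq> {- int n..int n} \<and> s' < V_proc nu T1 X c t \<omega> \<and> V_proc nu T1 X c t \<omega> \<le> s"
        by (intro cluster_window[OF X c s k1 k]) (auto simp: Bad1_def Bad2_def Bad3_def not_le not_less)
      then show "\<omega> \<in> Good" using \<omega> \<epsilon> by (auto simp: Good_def)
    qed
  qed
  then have "prob (space M - (Bad1 \<union> Bad2 \<union> Bad3)) \<le> prob Good"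
    by (rule finite_measure_mono_AE) (rule ev)
  moreover have "prob (space M - (Bad1 \<union> Bad2 \<union> Bad3)) = 1 - prob (Bad1 \<union> Bad2 \<union> Bad3)"
    using ev by (intro prob_compl) auto
  moreover have "prob (Bad1 \<union> Bad2 \<union> Bad3) \<le> prob Bad1 + prob Bad2 + prob Bad3"
    using measure_Un_le[of "Bad1 \<union> Bad2" M Bad3] measure_Un_le[of Bad1 M Bad2] ev by auto
  ultimately show ?thesis using p1 p23 unfolding Good_def by linarith
qed

lemma cluster_event_at_0:
  assumes "0 < \<epsilon>"
  shows "prob {\<omega>\<in>space M. C_clus T1 X c 0 \<omega> \<subseteq> {- int n..int n} \<and> \<bar>V_proc nu T1 X c 0 \<omega> - 0\<bar> < \<epsilon>} = 1"
proof -
  have "prob {\<omega>\<in>space M. 0 < T1 0 \<omega>} = 1" using prob_T1_gt[of 0 0] by (simp add: tail_0)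
  then have "AE \<omega> in M. 0 < T1 0 \<omega>"
    by (subst (asm) prob_eq_1) (auto intro: AE_mp)
  then have "AE \<omega> in M. C_clus T1 X c 0 \<omega> \<subseteq> {- int n..int n} \<and> \<bar>V_proc nu T1 X c 0 \<omega> - 0\<bar> < \<epsilon>"
    using AE_interarrivals_nonneg
  proof eventually_elim
    case (elim \<omega>)
    then have "\<not> occupied T1 X c 0 0 \<omega>" using occupied_iff_T1_le[of X 0 \<omega> T1 c 0] by simp
    then have "C_clus T1 X c 0 \<omega> = {}" by (simp add: C_clus_eq_zero_cluster zero_cluster_def)
    then show ?case using assms by (simp add: V_proc_eq_cluster_value cluster_value_def)
  qed
  then show ?thesis
    by (subst prob_eq_1) (use sets_cluster_event[where t = 0 and c = c and n = n and \<epsilon> = \<epsilon>] in auto)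
qed

lemma tail_mult_half_inverse_at_top:
  assumes "0 < t" "t < s"
  shows "filterlim (\<lambda>l. tail (a l * t) * real (nat \<lfloor>1 / (2 * tail (a l * s))\<rfloor>)) at_top (at_right 0)"
proof (rule filterlim_at_top_mono)
  have "filterlim (\<lambda>l. tail (a l * t) / tail (a l * s) * (1 / 2)) at_top (at_right 0)"
    using filterlim_at_top_mult_tendsto_pos[OF tendsto_const[of "1 / 2 :: real"] _
        tail_ratio_scaled_at_top[OF assms]]
    by simp
  then show "filterlim (\<lambda>l. - 1 + tail (a l * t) / tail (a l * s) * (1 / 2)) at_top (at_right 0)"
    by (rule filterlim_tendsto_add_at_top[OF tendsto_const])
  show "eventually (\<lambda>l. - 1 + tail (a l * t) / tail (a l * s) * (1 / 2)
      \<le> tail (a l * t) * real (nat \<lfloor>1 / (2 * tail (a l * s))\<rfloor>)) (at_right 0)"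
  proof (intro always_eventually allI)
    fix l
    define x where "x = 1 / (2 * tail (a l * s))"
    have "0 < x" by (simp add: x_def tail_pos)
    then have "x - 1 \<le> real (nat \<lfloor>x\<rfloor>)" by linarith
    then have "tail (a l * t) * (x - 1) \<le> tail (a l * t) * real (nat \<lfloor>x\<rfloor>)"
      by (rule mult_left_mono) (rule tail_nonneg)
    moreover have "tail (a l * t) * (x - 1) = tail (a l * t) / tail (a l * s) * (1 / 2) - tail (a l * t)"
      using tail_pos[of "a l * s"] by (simp add: x_def field_simps)
    ultimately show "- 1 + tail (a l * t) / tail (a l * s) * (1 / 2)
        \<le> tail (a l * t) * real (nat \<lfloor>1 / (2 * tail (a l * s))\<rfloor>)"
      using tail_le_1[of "a l * t"] by (simp add: x_def)
  qed
qed

lemma cluster_bad_bound_tendsto_0: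
  assumes s: "0 < s'" "s' < t" "t < s" and t: "t < 1"
  shows "((\<lambda>l. real (nat \<lceil>1 / tail (a l * s')\<rceil> + 1) * tail (a l * t)
      + 2 * (1 - tail (a l * t)) ^ min (nat \<lfloor>1 / (2 * tail (a l * s))\<rfloor>) (m l)) \<longlongrightarrow> 0) (at_right 0)"
    (is "(?B \<longlongrightarrow> 0) _")
proof (rule tendsto_sandwich[OF _ _ tendsto_const])
  define q k where "q l = tail (a l * t)" and "k l = min (nat \<lfloor>1 / (2 * tail (a l * s))\<rfloor>) (m l)" for l
  have q: "0 < q l" "q l \<le> 1" for l by (simp_all add: q_def tail_pos tail_le_1)
  have "filterlim (\<lambda>l. min (q l * real (nat \<lfloor>1 / (2 * tail (a l * s))\<rfloor>)) (q l * real (m l)))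
      at_top (at_right 0)"
    using filterlim_min_at_top[OF tail_mult_half_inverse_at_top[of t s] m_tail_at_top[of t]] s t
    by (simp add: q_def tail_def mult.commute)
  moreover have "min (q l * real (nat \<lfloor>1 / (2 * tail (a l * s))\<rfloor>)) (q l * real (m l)) = q l * real (k l)"
    for l using less_imp_le[OF q(1)] by (simp add: k_def min_mult_distrib_left of_nat_min)
  ultimately have qk: "filterlim (\<lambda>l. q l * real (k l)) at_top (at_right 0)"
    by simp
  have "((\<lambda>l. q l / tail (a l * s')) \<longlongrightarrow> 0) (at_right 0)" "(q \<longlongrightarrow> 0) (at_right 0)"
    unfolding q_def using s
    by (auto intro: tail_ratio_scaled_tendsto_0 tail_scaled_tendsto_0)
  then have "((\<lambda>l. q l / tail (a l * s') + 2 * q l + 2 * exp (- (q l * real (k l))))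
      \<longlongrightarrow> 0 + 2 * 0 + 2 * 0) (at_right 0)"
    by (intro tendsto_intros tendsto_exp_uminus_at_top[OF qk])
  then show "((\<lambda>l. q l / tail (a l * s') + 2 * q l + 2 * exp (- (q l * real (k l)))) \<longlongrightarrow> 0) (at_right 0)"
    by simp
  show "eventually (\<lambda>l. ?B l \<le> q l / tail (a l * s') + 2 * q l + 2 * exp (- (q l * real (k l))))
    (at_right 0)"
    by (intro always_eventually allI)
       (use bad_event_bound_le_exp(2)[OF tail_pos less_imp_le[OF q(1)] q(2)] in \<open>simp add: q_def k_def\<close>)
  show "eventually (\<lambda>l. 0 \<le> ?B l) (at_right 0)"
    by (intro always_eventually allI bad_event_bound_le_exp(1)[OF tail_pos tail_nonneg tail_le_1])
qed

lemma cluster_event_tendsto_1: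
  assumes t: "0 < t" "t < 1" and \<epsilon>: "0 < \<epsilon>"
  shows "((\<lambda>l. prob {\<omega>\<in>space M. C_clus T1 X (a l) t \<omega> \<subseteq> {- int (m l)..int (m l)}
             \<and> \<bar>V_proc nu T1 X (a l) t \<omega> - t\<bar> < \<epsilon>}) \<longlongrightarrow> 1) (at_right 0)"
proof -
  define s s' where "s = t + \<epsilon> / 2" and "s' = max (t / 2) (t - \<epsilon> / 2)"
  have s: "0 < s'" "s' < 1" "0 < s" "t - \<epsilon> < s'" "s < t + \<epsilon>" "s' < t" "t < s"
    using t \<epsilon> by (auto simp: s_def s'_def)
  define B where "B l = real (nat \<lceil>1 / tail (a l * s')\<rceil> + 1) * tail (a l * t)
      + 2 * (1 - tail (a l * t)) ^ min (nat \<lfloor>1 / (2 * tail (a l * s))\<rfloor>) (m l)" for l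
  have lower: "eventually (\<lambda>l. 1 - B l \<le> prob {\<omega>\<in>space M. C_clus T1 X (a l) t \<omega> \<subseteq> {- int (m l)..int (m l)}
      \<and> \<bar>V_proc nu T1 X (a l) t \<omega> - t\<bar> < \<epsilon>}) (at_right 0)"
    using eventually_unit_interval_at_right_0
  proof eventually_elim
    case (elim l)
    have "real (nat \<lfloor>1 / (2 * tail (a l * s))\<rfloor>) \<le> 1 / (2 * tail (a l * s))"
      using tail_pos[of "a l * s"] by (simp add: of_nat_nat)
    moreover have "2 * (1 / (2 * tail (a l * s))) = 1 / tail (a l * s)" by simp
    ultimately have "2 * real (nat \<lfloor>1 / (2 * tail (a l * s))\<rfloor>) \<le> 1 / tail (a l * s)"
      by linarith
    then have "2 * real (min (nat \<lfloor>1 / (2 * tail (a l * s))\<rfloor>) (m l)) - 1 \<le> 1 / tail (a l * s)"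
      by linarith
    then show ?case
      unfolding B_def by (rule cluster_event_prob_ge[OF a_pos[OF elim] s(1-5) real_nat_ceiling_ge]) auto
  qed
  have "((\<lambda>l. 1 - B l) \<longlongrightarrow> 1 - 0) (at_right 0)"
    unfolding B_def using s t by (intro tendsto_diff tendsto_const cluster_bad_bound_tendsto_0) auto
  then show ?thesis
    by (intro tendsto_sandwich[OF lower _ _ tendsto_const]) auto
qed

lemma cluster_event_prob_tendsto_1:
  assumes "0 < \<epsilon>" and "t \<in> {0..<1}"
  shows "((\<lambda>l. prob {\<omega>\<in>space M. C_clus T1 X (a l) t \<omega> \<subseteq> {- int (m l)..int (m l)}
             \<and> \<bar>V_proc nu T1 X (a l) t \<omega> - t\<bar> < \<epsilon>}) \<longlongrightarrow> 1) (at_right 0)"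
proof (cases "t = 0")
  case True
  then show ?thesis using cluster_event_at_0[OF assms(1)] by simp
next
  case False
  then show ?thesis using assms by (intro cluster_event_tendsto_1) auto
qed

end

theorem mainTheorem11:
  fixes M :: "'a measure"
    and muS :: "real measure"
    and T1 :: "int \<Rightarrow> 'a \<Rightarrow> real"
    and X :: "int \<Rightarrow> nat \<Rightarrow> 'a \<Rightarrow> real"
    and a :: "real \<Rightarrow> real"
    and m :: "real \<Rightarrow> nat"
  assumes PM: "prob_space M"
    and mu_prob: "prob_space muS" and mu_sets: "sets muS = sets borel"
    and mu_pos: "measure muS {0<..} = 1"
    and mu_unbdd: "\<forall>x. measure muS {x<..} > 0"
    and mu_mean: "integrable muS (\<lambda>x. x)"
    and H_inf: "\<forall>t>0. (t < 1 \<longrightarrow> ((\<lambda>x. measure (stat_nu muS) {x<..} / measure (stat_nu muS) {t*x<..})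
                              \<longlongrightarrow> 0) at_top)
                   \<and> (t = 1 \<longrightarrow> ((\<lambda>x. measure (stat_nu muS) {x<..} / measure (stat_nu muS) {t*x<..})
                              \<longlongrightarrow> 1) at_top)
                   \<and> (t > 1 \<longrightarrow> filterlim (\<lambda>x. measure (stat_nu muS) {x<..} / measure (stat_nu muS) {t*x<..})
                              at_top at_top)"
    and a_def: "\<forall>l\<in>{0<..1}. l * a l = measure (stat_nu muS) {a l<..}"
    and m_mono: "\<forall>l1 l2. 0 < l1 \<and> l1 \<le> l2 \<and> l2 \<le> 1 \<longrightarrow> m l2 \<le> m l1"
    and m_inf: "filterlim m at_top (at_right 0)"
    and m_n: "((\<lambda>l. real (m l) / real (nat \<lfloor>1 / (l * a l)\<rfloor>)) \<longlongrightarrow> 0) (at_right 0)"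
    and m_nu: "\<forall>z\<in>{0..<1}. filterlim (\<lambda>l. real (m l) * measure (stat_nu muS) {a l * z<..})
                               at_top (at_right 0)"
    and indep: "prob_space.indep_vars M (\<lambda>_. borel)
                  (\<lambda>p. case p of (i, 0) \<Rightarrow> T1 i | (i, Suc k) \<Rightarrow> X i (Suc k)) UNIV"
    and T1_distr: "\<forall>i. distr M borel (T1 i) = stat_nu muS"
    and X_distr: "\<forall>i. \<forall>k\<ge>1. distr M borel (X i k) = muS"
  shows
    "(\<forall>\<epsilon>>0. \<forall>T>0.
        (\<forall>l\<in>{0<..1}. {\<omega>\<in>space M. (SUP t\<in>{0..T}.
             \<bar>U_proc (stat_nu muS) T1 X (a l) (m l) t \<omega> - min t 1\<bar>) > \<epsilon>} \<in> sets M)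
      \<and> ((\<lambda>l. measure M {\<omega>\<in>space M. (SUP t\<in>{0..T}.
             \<bar>U_proc (stat_nu muS) T1 X (a l) (m l) t \<omega> - min t 1\<bar>) > \<epsilon>}) \<longlongrightarrow> 0) (at_right 0))
   \<and> (\<forall>\<epsilon>>0. \<forall>t\<in>{0..<1}.
        (\<forall>l\<in>{0<..1}. {\<omega>\<in>space M. C_clus T1 X (a l) t \<omega> \<subseteq> {- int (m l)..int (m l)}
             \<and> \<bar>V_proc (stat_nu muS) T1 X (a l) t \<omega> - t\<bar> < \<epsilon>} \<in> sets M)
      \<and> ((\<lambda>l. measure M {\<omega>\<in>space M. C_clus T1 X (a l) t \<omega> \<subseteq> {- int (m l)..int (m l)}
             \<and> \<bar>V_proc (stat_nu muS) T1 X (a l) t \<omega> - t\<bar> < \<epsilon>}) \<longlongrightarrow> 1) (at_right 0))"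
proof -
  \<comment> \<open>Only the case \<open>t > 1\<close> of \<open>H_inf\<close> is needed, and \<open>mu_mean\<close>, \<open>m_mono\<close>, \<open>m_inf\<close>, \<open>m_n\<close> are not
    used: \<open>stat_nu muS\<close> is the law of \<open>T1 0\<close>, hence a probability measure, which already forces
    \<open>0 < mean_of muS\<close>.\<close>
  interpret renewal_array M muS T1 X a m
  proof (rule renewal_array.intro[OF PM], rule renewal_array_axioms.intro)
    show "1 < t \<Longrightarrow> filterlim (\<lambda>x. measure (stat_nu muS) {x<..} / measure (stat_nu muS) {t * x<..})
        at_top at_top" for t
      using H_inf by auto
  qed (use mu_prob mu_sets mu_pos mu_unbdd a_def m_nu indep T1_distr X_distr in auto)
  show ?thesis
    using sets_U_sup_gt[OF a_pos] U_sup_deviation_tendsto_0 sets_cluster_event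
      cluster_event_prob_tendsto_1
    by auto
qed

end
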